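(* Let $K$ be an algebraically closed field complete with respect to a non-archimedean absolute value $|\cdot|$, with valuation ring $\mathcal{O}$, maximal ideal $\mathfrak{m}$, residue field $k$. Let $\lambda_1,\lambda_2\in K$ with $\lambda_1\lambda_2\ne1$, and let $\varphi(z)=\dfrac{z^2+\lambda_1z}{\lambda_2z+1}$, assumed to have three distinct fixed points $0,\infty,\alpha_3=(\lambda_1-1)/(\lambda_2-1)$, with multipliers $\lambda_1,\lambda_2,\lambda_3$ respectively. Let $\xi$ be the unique point of $\mathbb{P}^1_{\mathrm{Berk}}$ with $w_\varphi(\xi)=1$. (A) If $\varphi$ has no repelling classical fixed points, then $\xi$ satisfies (W1). Moreover: (i) if $\widetilde{\lambda_1\lambda_2}\ne\tilde1$, then $\xi=\zeta_G$; (ii) if $\tilde\lambda_1=\tilde\lambda_2=\tilde\lambda_3=\tilde1$, then $\xi=\zeta_{D(-1,\sqrt{|\lambda_1\lambda_2-1|})}$. (B) If $|\lambda_1|>1\ge|\lambda_2|$, then $\xi=\zeta_{D(0,|\lambda_1|)}$; moreover (i) if $\tilde\lambda_2\notin\{\tilde0,\tilde1\}$, $\xi$ satisfies (W2); (ii) if $\tilde\lambda_2=\tilde1$, $\xi$ satisfies (W3); (iii) if $\tilde\lambda_2=\tilde0$, $\xi$ satisfies (W4).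
   Context: A classical fixed point with multiplier $\lambda$ is repelling if $|\lambda|>1$. $\mathbb{P}^1_{\mathrm{Berk}}$ is the Berkovich projective line over $K$; $\zeta_{D(a,r)}$ is the point corresponding to $D(a,r)=\{x:|x-a|\le r\}$, $\zeta_G=\zeta_{D(0,1)}$. For a type II point $P=\gamma(\zeta_G)$, $\gamma\in\mathrm{PGL}_2(K)$, the reduction $\tilde\varphi_P$ is the reduction mod $\mathfrak{m}$ of a normalized lift (coefficients in $\mathcal{O}$, one a unit) of $\gamma^{-1}\circ\varphi\circ\gamma$, after cancelling common factors; $P$ is fixed iff $\tilde\varphi_P$ is nonconstant. $\Gamma_{\mathrm{Fix}}$ is the tree spanned by the classical fixed points; $\Gamma_{\mathrm{Fix,Repel}}$ the tree spanned by classical fixed points and type II fixed points with $\deg\tilde\varphi_P\ge2$, $v(P)$ the valence there. Weight $w_\varphi(P)$: for type II fixed $P$, $\deg\tilde\varphi_P-1+N(P)$, $N(P)$ the number of tangent directions at $P$ containing classical fixed points that are moved by $\varphi_*$; for a branch point of $\Gamma_{\mathrm{Fix}}$ moved by $\varphi$, $v(P)-2$; else $0$. For degree 2 exactly one point has positive weight, equal to 1. (W1): $P$ fixed with $\deg\tilde\varphi_P\ge2$. (W2): $P$ fixed, $\tilde\varphi_P$ conjugate over $k$ to $\tilde cz$ with $\tilde c\in k^\times\setminus\{\tilde1\}$, and $P$ a branch point of $\Gamma_{\mathrm{Fix}}$. (W3): $P$ fixed, $\tilde\varphi_P$ conjugate to $z+\tilde a$, $\tilde a\in k^\times$, and $P\in\Gamma_{\mathrm{Fix}}$.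 (W4): $P$ a branch point of $\Gamma_{\mathrm{Fix}}$ moved by $\varphi$. *)

theory Defs
  imports "HOL-Computational_Algebra.Polynomial"
begin

text \<open>K is a type 'a with a non-archimedean absolute value absv; O = {x. absv x \<le> 1},
  m = {x. absv x < 1}. The residue field k is a type 'k together with a reduction map
  red which, restricted to O, is a surjective ring homomorphism onto 'k with kernel m
  (so 'k is isomorphic to O/m). Values of red outside O are irrelevant.\<close>

definition nonarch_abs :: "('a::field \<Rightarrow> real) \<Rightarrow> bool" where
  "nonarch_abs absv \<longleftrightarrow>
     absv 0 = 0 \<and> (\<forall>x. x \<noteq> 0 \<longrightarrow> absv x > 0) \<and>
     (\<forall>x y. absv (x * y) = absv x * absv y) \<and>
     (\<forall>x y. absv (x + y) \<le> max (absv x) (absv y))"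

definition complete_wrt :: "('a::field \<Rightarrow> real) \<Rightarrow> bool" where
  "complete_wrt absv \<longleftrightarrow>
     (\<forall>s :: nat \<Rightarrow> 'a.
        (\<forall>e>0. \<exists>N. \<forall>m\<ge>N. \<forall>n\<ge>N. absv (s m - s n) < e) \<longrightarrow>
        (\<exists>L. \<forall>e>0. \<exists>N. \<forall>n\<ge>N. absv (s n - L) < e))"

definition alg_closed :: "'a::field itself \<Rightarrow> bool" where
  "alg_closed _ \<longleftrightarrow> (\<forall>p :: 'a poly. degree p > 0 \<longrightarrow> (\<exists>x. poly p x = 0))"

definition residue_map :: "('a::field \<Rightarrow> real) \<Rightarrow> ('a \<Rightarrow> 'k::field) \<Rightarrow> bool" where
  "residue_map absv red \<longleftrightarrow>
     (\<forall>x y. absv x \<le> 1 \<longrightarrow> absv y \<le> 1 \<longrightarrow>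
        red (x + y) = red x + red y \<and> red (x * y) = red x * red y) \<and>
     red 1 = 1 \<and>
     (\<forall>x. absv x \<le> 1 \<longrightarrow> (red x = 0 \<longleftrightarrow> absv x < 1)) \<and>
     (\<forall>k. \<exists>x. absv x \<le> 1 \<and> red x = k)"

datatype 'b P1 = Fin 'b | Inf

text \<open>A homogeneous form F(X,Y) of degree d is represented by its dehomogenisation
  f(z) = F(z,1), a polynomial of degree \<le> d; F(1,0) = coeff f d.\<close>

definition form_eval :: "nat \<Rightarrow> 'b::comm_ring_1 poly \<Rightarrow> 'b P1 \<Rightarrow> 'b" where
  "form_eval d p x = (case x of Fin z \<Rightarrow> poly p z | Inf \<Rightarrow> coeff p d)"

definition map_eval :: "nat \<Rightarrow> 'b::field poly \<Rightarrow> 'b poly \<Rightarrow> 'b P1 \<Rightarrow> 'b P1" where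
  "map_eval d f g x =
     (if form_eval d g x \<noteq> 0 then Fin (form_eval d f x / form_eval d g x) else Inf)"

definition clfix :: "nat \<Rightarrow> 'b::field poly \<Rightarrow> 'b poly \<Rightarrow> 'b P1 set" where
  "clfix d f g = {x. map_eval d f g x = x}"

definition fin_multiplier :: "'b::field poly \<Rightarrow> 'b poly \<Rightarrow> 'b \<Rightarrow> 'b" where
  "fin_multiplier f g x =
     (poly (pderiv f) x * poly g x - poly f x * poly (pderiv g) x) / (poly g x)^2"

definition mob :: "'b::field \<Rightarrow> 'b \<Rightarrow> 'b \<Rightarrow> 'b \<Rightarrow> 'b P1 \<Rightarrow> 'b P1" where
  "mob p q r s = map_eval 1 [:q, p:] [:s, r:]"

definition conj_over :: "('b::field P1 \<Rightarrow> 'b P1) \<Rightarrow> ('b P1 \<Rightarrow> 'b P1) \<Rightarrow> bool" where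
  "conj_over \<psi> \<beta> \<longleftrightarrow>
     (\<exists>p q r s. p * s - q * r \<noteq> 0 \<and> (\<forall>x. \<psi> (mob p q r s x) = mob p q r s (\<beta> x)))"

definition phi_f :: "'a::field \<Rightarrow> 'a poly" where "phi_f l1 = [:0, l1, 1:]"
definition phi_g :: "'a::field \<Rightarrow> 'a poly" where "phi_g l2 = [:1, l2:]"

definition disc :: "('a::field \<Rightarrow> real) \<Rightarrow> 'a \<Rightarrow> real \<Rightarrow> 'a set" where
  "disc absv a r = {x. absv (x - a) \<le> r}"

text \<open>Type II points \<zeta>_{D(a,r)}, r \<in> |K^\<times>|, are identified with the discs D(a,r).\<close>
definition typeII :: "('a::field \<Rightarrow> real) \<Rightarrow> 'a set set" where
  "typeII absv = {D. \<exists>a c. c \<noteq> 0 \<and> D = disc absv a (absv c)}"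

text \<open>A chosen \<gamma>(z) = a + c z with \<gamma>(\<zeta>_G) = \<zeta>_D.\<close>
definition rep :: "('a::field \<Rightarrow> real) \<Rightarrow> 'a set \<Rightarrow> 'a \<times> 'a" where
  "rep absv D = (SOME ac. snd ac \<noteq> 0 \<and> D = disc absv (fst ac) (absv (snd ac)))"

text \<open>Lift of \<gamma>^{-1} \<circ> \<phi> \<circ> \<gamma> for \<gamma>(z) = a + c z.\<close>
definition conj_lift :: "'a::field poly \<Rightarrow> 'a poly \<Rightarrow> 'a \<Rightarrow> 'a \<Rightarrow> 'a poly \<times> 'a poly" where
  "conj_lift f g a c =
     (pcompose f [:a, c:] - smult a (pcompose g [:a, c:]), smult c (pcompose g [:a, c:]))"

definition all_coeffs :: "'a::zero poly \<times> 'a poly \<Rightarrow> 'a set" where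
  "all_coeffs fg = range (coeff (fst fg)) \<union> range (coeff (snd fg))"

definition norm_scalar :: "('a::field \<Rightarrow> real) \<Rightarrow> 'a poly \<times> 'a poly \<Rightarrow> 'a" where
  "norm_scalar absv fg =
     (SOME t. t \<noteq> 0 \<and> (\<forall>x\<in>all_coeffs fg. absv (t * x) \<le> 1) \<and>
              (\<exists>x\<in>all_coeffs fg. absv (t * x) = 1))"

definition red_pair :: "('a::field \<Rightarrow> real) \<Rightarrow> ('a \<Rightarrow> 'k::field) \<Rightarrow> 'a poly \<times> 'a poly
    \<Rightarrow> 'k poly \<times> 'k poly" where
  "red_pair absv red fg =
     (let t = norm_scalar absv fg
      in (map_poly red (smult t (fst fg)), map_poly red (smult t (snd fg))))"

definition red_lift_at :: "('a::field \<Rightarrow> real) \<Rightarrow> ('a \<Rightarrow> 'k::field) \<Rightarrow> 'a poly \<Rightarrow> 'a poly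
    \<Rightarrow> 'a set \<Rightarrow> 'k poly \<times> 'k poly" where
  "red_lift_at absv red f g D =
     (case rep absv D of (a, c) \<Rightarrow> red_pair absv red (conj_lift f g a c))"

definition common_factor :: "nat \<Rightarrow> 'k::field poly \<Rightarrow> 'k poly \<Rightarrow> nat \<Rightarrow> 'k poly \<times> 'k poly \<Rightarrow> bool" where
  "common_factor d F G e q \<longleftrightarrow>
     (\<exists>h. h \<noteq> 0 \<and> e \<le> d \<and> degree h \<le> e \<and> degree (fst q) \<le> d - e \<and> degree (snd q) \<le> d - e \<and>
          F = h * fst q \<and> G = h * snd q)"

definition cf_deg :: "nat \<Rightarrow> 'k::field poly \<Rightarrow> 'k poly \<Rightarrow> nat" where
  "cf_deg d F G = (GREATEST e. e \<le> d \<and> (\<exists>q. common_factor d F G e q))"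

definition red_quot :: "nat \<Rightarrow> 'k::field poly \<Rightarrow> 'k poly \<Rightarrow> 'k poly \<times> 'k poly" where
  "red_quot d F G = (SOME q. common_factor d F G (cf_deg d F G) q)"

definition red_deg_at :: "('a::field \<Rightarrow> real) \<Rightarrow> ('a \<Rightarrow> 'k::field) \<Rightarrow> nat \<Rightarrow> 'a poly \<Rightarrow> 'a poly
    \<Rightarrow> 'a set \<Rightarrow> nat" where
  "red_deg_at absv red d f g D =
     (case red_lift_at absv red f g D of (F, G) \<Rightarrow> d - cf_deg d F G)"

definition red_map_at :: "('a::field \<Rightarrow> real) \<Rightarrow> ('a \<Rightarrow> 'k::field) \<Rightarrow> nat \<Rightarrow> 'a poly \<Rightarrow> 'a poly
    \<Rightarrow> 'a set \<Rightarrow> 'k P1 \<Rightarrow> 'k P1" where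
  "red_map_at absv red d f g D =
     (case red_lift_at absv red f g D of (F, G) \<Rightarrow>
        (case red_quot d F G of (Q1, Q2) \<Rightarrow> map_eval (d - cf_deg d F G) Q1 Q2))"

text \<open>P is fixed iff \<phi>~_P is nonconstant.\<close>
definition fixedII :: "('a::field \<Rightarrow> real) \<Rightarrow> ('a \<Rightarrow> 'k::field) \<Rightarrow> nat \<Rightarrow> 'a poly \<Rightarrow> 'a poly
    \<Rightarrow> 'a set \<Rightarrow> bool" where
  "fixedII absv red d f g D \<longleftrightarrow> D \<in> typeII absv \<and> red_deg_at absv red d f g D \<ge> 1"

datatype 'a bpt = Cl "'a P1" | T2 "'a set"

text \<open>Tangent direction at the type II point D (identified with P^1(k) via the
  chosen \<gamma>) containing the point Q \<noteq> D.\<close>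
definition dir :: "('a::field \<Rightarrow> real) \<Rightarrow> ('a \<Rightarrow> 'k::field) \<Rightarrow> 'a set \<Rightarrow> 'a bpt \<Rightarrow> 'k P1" where
  "dir absv red D Q =
     (case rep absv D of (a, c) \<Rightarrow>
        (case Q of
           Cl Inf \<Rightarrow> Inf
         | Cl (Fin x) \<Rightarrow> (if absv (x - a) \<le> absv c then Fin (red ((x - a) / c)) else Inf)
         | T2 E \<Rightarrow> (if E \<subseteq> D then Fin (red (((SOME b. b \<in> E) - a) / c)) else Inf)))"

definition fixcl_pts :: "nat \<Rightarrow> 'a::field poly \<Rightarrow> 'a poly \<Rightarrow> 'a bpt set" where
  "fixcl_pts d f g = Cl ` clfix d f g"

text \<open>Generators of \<Gamma>_{Fix,Repel}: classical fixed points and type II fixed points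
  with deg \<phi>~_P \<ge> 2.\<close>
definition fixrep_pts :: "('a::field \<Rightarrow> real) \<Rightarrow> ('a \<Rightarrow> 'k::field) \<Rightarrow> nat \<Rightarrow> 'a poly \<Rightarrow> 'a poly
    \<Rightarrow> 'a bpt set" where
  "fixrep_pts absv red d f g =
     fixcl_pts d f g \<union> T2 ` {D. fixedII absv red d f g D \<and> red_deg_at absv red d f g D \<ge> 2}"

text \<open>Valence at D of the tree spanned by S = number of directions at D meeting it
  = number of directions at D containing points of S.\<close>
definition valence :: "('a::field \<Rightarrow> real) \<Rightarrow> ('a \<Rightarrow> 'k::field) \<Rightarrow> 'a bpt set \<Rightarrow> 'a set \<Rightarrow> nat" where
  "valence absv red S D = card (dir absv red D ` (S - {T2 D}))"

text \<open>D lies in \<Gamma>_Fix (type II point: at least two directions contain classical fixed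
  points), resp. is a branch point of \<Gamma>_Fix (at least three).\<close>
definition in_GammaFix :: "('a::field \<Rightarrow> real) \<Rightarrow> ('a \<Rightarrow> 'k::field) \<Rightarrow> nat \<Rightarrow> 'a poly \<Rightarrow> 'a poly
    \<Rightarrow> 'a set \<Rightarrow> bool" where
  "in_GammaFix absv red d f g D \<longleftrightarrow> D \<in> typeII absv \<and> valence absv red (fixcl_pts d f g) D \<ge> 2"

definition branch_GammaFix :: "('a::field \<Rightarrow> real) \<Rightarrow> ('a \<Rightarrow> 'k::field) \<Rightarrow> nat \<Rightarrow> 'a poly \<Rightarrow> 'a poly
    \<Rightarrow> 'a set \<Rightarrow> bool" where
  "branch_GammaFix absv red d f g D \<longleftrightarrow> D \<in> typeII absv \<and> valence absv red (fixcl_pts d f g) D \<ge> 3"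

text \<open>N(P): directions at P containing classical fixed points and moved by \<phi>_* = \<phi>~_P.\<close>
definition N_moved :: "('a::field \<Rightarrow> real) \<Rightarrow> ('a \<Rightarrow> 'k::field) \<Rightarrow> nat \<Rightarrow> 'a poly \<Rightarrow> 'a poly
    \<Rightarrow> 'a set \<Rightarrow> nat" where
  "N_moved absv red d f g D =
     card {v \<in> dir absv red D ` fixcl_pts d f g. red_map_at absv red d f g D v \<noteq> v}"

text \<open>The weight; it vanishes at points which are not of type II.\<close>
definition weight :: "('a::field \<Rightarrow> real) \<Rightarrow> ('a \<Rightarrow> 'k::field) \<Rightarrow> nat \<Rightarrow> 'a poly \<Rightarrow> 'a poly
    \<Rightarrow> 'a set \<Rightarrow> int" where
  "weight absv red d f g D =
     (if fixedII absv red d f g D then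
        int (red_deg_at absv red d f g D) - 1 + int (N_moved absv red d f g D)
      else if branch_GammaFix absv red d f g D then
        int (valence absv red (fixrep_pts absv red d f g) D) - 2
      else 0)"

definition W1 where
  "W1 absv red d f g D \<longleftrightarrow> fixedII absv red d f g D \<and> red_deg_at absv red d f g D \<ge> 2"

definition W2 where
  "W2 absv red d f g D \<longleftrightarrow> fixedII absv red d f g D \<and>
     (\<exists>c. c \<noteq> 0 \<and> c \<noteq> 1 \<and> conj_over (red_map_at absv red d f g D) (mob c 0 0 1)) \<and>
     branch_GammaFix absv red d f g D"

definition W3 where
  "W3 absv red d f g D \<longleftrightarrow> fixedII absv red d f g D \<and>
     (\<exists>a. a \<noteq> 0 \<and> conj_over (red_map_at absv red d f g D) (mob 1 a 0 1)) \<and>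
     in_GammaFix absv red d f g D"

definition W4 where
  "W4 absv red d f g D \<longleftrightarrow> branch_GammaFix absv red d f g D \<and> \<not> fixedII absv red d f g D"

end

theory Submission
  imports Defs
begin

text \<open>
  Write a type II point as $D(a, |c|)$ and $\gamma(z) = a + cz$. The lift of
  $\gamma^{-1} \circ \varphi \circ \gamma$ has coefficients that are explicit polynomials in $a$, $c$,
  $\lambda_1$, $\lambda_2$; normalising by a scalar $t$ and reducing gives forms $F$, $G$ over $k$ of
  degrees $\le 2$ and $\le 1$. A point of weight $1$ is of one of three kinds: $F$ and $G$ are coprime
  (reduction of degree $2$); exactly one linear factor cancels and some direction towards a classical
  fixed point is moved, which forces that fixed point onto the cancelled factor and makes the
  reduction affine; or $D$ is a branch point of $\Gamma_{\mathrm{Fix}}$ that is not fixed. Comparing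
  absolute values of the normalised coefficients with $|\lambda_1|$, $|\lambda_2|$ and the multiplier
  at $\alpha_3$ decides which kinds occur. Under (A) only the first does, and the resultant,
  $|1 - \lambda_1 \lambda_2| = |c|^2$, locates the disc. Under (B) the first is impossible; in the
  second the moved direction points to $0$, so $D = D(0, |\lambda_1|)$ with reduction
  $z \mapsto \tilde\lambda_2^{-1} z + \beta$, and the third forces $|\lambda_2| < 1$.
\<close>

section \<open>Ultrametric absolute values, reduction and normalisation\<close>

lemma all_coeffs_eq: "all_coeffs fg = insert 0 (set (coeffs (fst fg)) \<union> set (coeffs (snd fg)))"
  unfolding all_coeffs_def range_coeff by auto

lemma all_coeffs_pair:
  "{x0, x1, x2, y0, y1} \<subseteq> all_coeffs ([:x0, x1, x2:], [:y0, y1:])"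
  "all_coeffs ([:x0, x1, x2:], [:y0, y1:]) \<subseteq> {x0, x1, x2, y0, y1, 0}"
proof -
  have "coeff [:x0, x1, x2:] 2 = x2" by (simp add: numeral_2_eq_2)
  then show "{x0, x1, x2, y0, y1} \<subseteq> all_coeffs ([:x0, x1, x2:], [:y0, y1:])"
    unfolding all_coeffs_def by (auto intro: range_eqI[where x = 0] range_eqI[where x = 1] range_eqI[where x = 2])
  show "all_coeffs ([:x0, x1, x2:], [:y0, y1:]) \<subseteq> {x0, x1, x2, y0, y1, 0}"
    unfolding all_coeffs_def by (auto simp: coeff_pCons split: nat.splits)
qed

locale ultrametric =
  fixes absv :: "'a::field \<Rightarrow> real"
  assumes nonarch: "nonarch_abs absv"
begin

lemma absv_zero [simp]: "absv 0 = 0"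
  using nonarch unfolding nonarch_abs_def by auto

lemma absv_pos: "x \<noteq> 0 \<Longrightarrow> absv x > 0"
  using nonarch unfolding nonarch_abs_def by auto

lemma absv_nonneg [simp]: "absv x \<ge> 0"
  using absv_pos[of x] by (cases "x = 0") auto

lemma absv_eq_0_iff [simp]: "absv x = 0 \<longleftrightarrow> x = 0"
  by (cases "x = 0") (auto dest: absv_pos)

lemma absv_mult [simp]: "absv (x * y) = absv x * absv y"
  using nonarch unfolding nonarch_abs_def by auto

lemma absv_add: "absv (x + y) \<le> max (absv x) (absv y)"
  using nonarch unfolding nonarch_abs_def by auto

lemma absv_one [simp]: "absv 1 = 1"
proof -
  have "absv 1 = absv 1 * absv 1" using absv_mult[of 1 1] by simp
  with absv_pos[of 1] show ?thesis by (metis mult_cancel_right1 less_irrefl zero_neq_one)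
qed

lemma absv_minus_one [simp]: "absv (-1) = 1"
proof -
  have "absv (-1) * absv (-1) = 1" using absv_mult[of "-1" "-1"] by simp
  then show ?thesis by (metis absv_nonneg abs_of_nonneg abs_square_eq_1 power2_eq_square)
qed

lemma absv_minus [simp]: "absv (- x) = absv x"
  using absv_mult[of "-1" x] by simp

lemma absv_diff: "absv (x - y) \<le> max (absv x) (absv y)"
  using absv_add[of x "-y"] by simp

lemma absv_diff_commute: "absv (x - y) = absv (y - x)"
  using absv_minus[of "x - y"] by simp

lemma absv_inverse [simp]: "absv (inverse x) = inverse (absv x)"
proof (cases "x = 0")
  case False
  then have "absv x * absv (inverse x) = 1" using absv_mult[of x "inverse x"] by simp
  then show ?thesis using inverse_unique by metis
qed simp

lemma absv_divide [simp]: "absv (x / y) = absv x / absv y"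
  by (simp add: divide_inverse)

lemma absv_power [simp]: "absv (x ^ n) = absv x ^ n"
  by (induction n) auto

lemma absv_add_le: "absv x \<le> r \<Longrightarrow> absv y \<le> r \<Longrightarrow> absv (x + y) \<le> r"
  using absv_add[of x y] by simp

lemma absv_diff_le: "absv x \<le> r \<Longrightarrow> absv y \<le> r \<Longrightarrow> absv (x - y) \<le> r"
  using absv_diff[of x y] by simp

lemma absv_add_le_max: "absv x \<le> A \<Longrightarrow> absv y \<le> B \<Longrightarrow> absv (x + y) \<le> max A B"
  using absv_add[of x y] by (simp add: max_def split: if_splits)

lemma absv_mult_le: "absv x \<le> A \<Longrightarrow> absv y \<le> B \<Longrightarrow> absv (x * y) \<le> A * B"
  by (simp add: mult_mono')

lemma absv_two_le: "absv (2::'a) \<le> 1"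
proof -
  have "absv (1 + 1 :: 'a) \<le> 1" using absv_add_le[of 1 1 1] by simp
  then show ?thesis by (simp only: one_add_one)
qed

lemma absv_add_eq_right: "absv x < absv y \<Longrightarrow> absv (x + y) = absv y"
proof -
  assume lt: "absv x < absv y"
  have "absv y \<le> max (absv (x + y)) (absv x)" using absv_diff[of "x + y" x] by simp
  with lt have "absv y \<le> absv (x + y)" by (auto simp: max_def split: if_splits)
  with lt absv_add[of x y] show ?thesis by simp
qed

lemma absv_add_eq_left: "absv y < absv x \<Longrightarrow> absv (x + y) = absv x"
  using absv_add_eq_right[of y x] by (simp add: add.commute)

lemma absv_diff_eq_left: "absv y < absv x \<Longrightarrow> absv (x - y) = absv x"
  using absv_add_eq_left[of "-y" x] by simp

lemma absv_diff_eq_right: "absv x < absv y \<Longrightarrow> absv (x - y) = absv y"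
  using absv_add_eq_right[of x "-y"] by simp

lemma disc_cong_center: "absv (a - b) \<le> r \<Longrightarrow> disc absv a r = disc absv b r"
proof -
  assume ab: "absv (a - b) \<le> r"
  have "absv (x - a) \<le> r \<longleftrightarrow> absv (x - b) \<le> r" for x
    using absv_add_le[of "x - a" r "a - b"] absv_diff_le[of "x - b" r "a - b"] ab
    by (auto simp: algebra_simps)
  then show ?thesis unfolding disc_def by auto
qed

text \<open>Divide by a coefficient of maximal absolute value.\<close>

lemma norm_scalar_spec:
  assumes "fst fg \<noteq> 0 \<or> snd fg \<noteq> 0"
  defines "t \<equiv> norm_scalar absv fg"
  shows "t \<noteq> 0 \<and> (\<forall>x\<in>all_coeffs fg. absv (t * x) \<le> 1) \<and> (\<exists>x\<in>all_coeffs fg. absv (t * x) = 1)"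
proof -
  let ?S = "all_coeffs fg"
  have "finite ?S" unfolding all_coeffs_eq by simp
  have "\<exists>x\<in>?S. x \<noteq> 0"
    using assms(1) unfolding all_coeffs_def by (auto simp: poly_eq_iff)
  then have "Max (absv ` ?S) > 0" using \<open>finite ?S\<close> absv_pos by (fastforce intro: Max_gr_iff[THEN iffD2])
  obtain z where z: "z \<in> ?S" "absv z = Max (absv ` ?S)"
    using Max_in[of "absv ` ?S"] \<open>finite ?S\<close> unfolding all_coeffs_def by fastforce
  with \<open>Max (absv ` ?S) > 0\<close> have "z \<noteq> 0" by auto
  have "absv (inverse z * x) \<le> 1" if "x \<in> ?S" for x
    using Max_ge[of "absv ` ?S" "absv x"] \<open>finite ?S\<close> that z(2) \<open>z \<noteq> 0\<close> absv_pos[of z]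
    by (simp add: divide_le_eq_1 divide_inverse[symmetric] mult.commute[of "inverse _"])
  moreover have "absv (inverse z * z) = 1" using \<open>z \<noteq> 0\<close> by simp
  ultimately have "\<exists>t. t \<noteq> 0 \<and> (\<forall>x\<in>?S. absv (t * x) \<le> 1) \<and> (\<exists>x\<in>?S. absv (t * x) = 1)"
    using z(1) \<open>z \<noteq> 0\<close> by (intro exI[of _ "inverse z"] conjI ballI bexI[of _ z]) simp_all
  then show ?thesis unfolding t_def norm_scalar_def by (rule someI_ex)
qed

end

definition in_O :: "('a \<Rightarrow> real) \<Rightarrow> 'a \<Rightarrow> bool" where
  "in_O absv x \<longleftrightarrow> absv x \<le> 1"

locale residue_field = ultrametric absv
  for absv :: "'a::field \<Rightarrow> real" +
  fixes red :: "'a \<Rightarrow> 'k::field"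
  assumes residue: "residue_map absv red"
begin

lemma red_add: "absv x \<le> 1 \<Longrightarrow> absv y \<le> 1 \<Longrightarrow> red (x + y) = red x + red y"
  using residue unfolding residue_map_def by blast

lemma red_mult: "absv x \<le> 1 \<Longrightarrow> absv y \<le> 1 \<Longrightarrow> red (x * y) = red x * red y"
  using residue unfolding residue_map_def by blast

lemma red_one [simp]: "red 1 = 1"
  using residue unfolding residue_map_def by blast

lemma red_eq_0_iff: "absv x \<le> 1 \<Longrightarrow> red x = 0 \<longleftrightarrow> absv x < 1"
  using residue unfolding residue_map_def by blast

lemma red_neq_0_iff: "absv x \<le> 1 \<Longrightarrow> red x \<noteq> 0 \<longleftrightarrow> absv x = 1"
  using red_eq_0_iff[of x] by auto

lemma red_zero [simp]: "red 0 = 0"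
  using red_eq_0_iff[of 0] by simp

lemma red_minus: "absv x \<le> 1 \<Longrightarrow> red (- x) = - red x"
  using red_add[of x "-x"] by (simp add: eq_neg_iff_add_eq_0 add.commute)

lemma red_diff: "absv x \<le> 1 \<Longrightarrow> absv y \<le> 1 \<Longrightarrow> red (x - y) = red x - red y"
  using red_add[of x "-y"] red_minus[of y] by simp

lemma red_eq_iff: "absv x \<le> 1 \<Longrightarrow> absv y \<le> 1 \<Longrightarrow> red x = red y \<longleftrightarrow> absv (x - y) < 1"
  using red_diff[of x y] red_eq_0_iff[of "x - y"] absv_diff_le[of x 1 y] by auto

lemma red_two: "red 2 = 2"
proof -
  have "red (1 + 1 :: 'a) = red 1 + red 1" by (rule red_add) simp_all
  then show ?thesis by (simp only: red_one one_add_one)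
qed

lemma in_O_add [simp]: "in_O absv x \<Longrightarrow> in_O absv y \<Longrightarrow> in_O absv (x + y)"
  unfolding in_O_def using absv_add_le by blast

lemma in_O_diff [simp]: "in_O absv x \<Longrightarrow> in_O absv y \<Longrightarrow> in_O absv (x - y)"
  unfolding in_O_def using absv_diff_le by blast

lemma in_O_mult [simp]: "in_O absv x \<Longrightarrow> in_O absv y \<Longrightarrow> in_O absv (x * y)"
  unfolding in_O_def by (simp add: mult_le_one)

lemma in_O_numeral [simp]: "in_O absv 0" "in_O absv 1" "in_O absv 2"
  unfolding in_O_def using absv_two_le by simp_all

lemma in_O_power [simp]: "in_O absv x \<Longrightarrow> in_O absv (x ^ n)"
  by (induction n) simp_all

lemma red_add_in_O [simp]: "in_O absv x \<Longrightarrow> in_O absv y \<Longrightarrow> red (x + y) = red x + red y"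
  unfolding in_O_def by (rule red_add)

lemma red_diff_in_O [simp]: "in_O absv x \<Longrightarrow> in_O absv y \<Longrightarrow> red (x - y) = red x - red y"
  unfolding in_O_def by (rule red_diff)

lemma red_mult_in_O [simp]: "in_O absv x \<Longrightarrow> in_O absv y \<Longrightarrow> red (x * y) = red x * red y"
  unfolding in_O_def by (rule red_mult)

lemma red_power_in_O [simp]: "in_O absv x \<Longrightarrow> red (x ^ n) = red x ^ n"
  by (induction n) simp_all

end

section \<open>Cancelling common factors of the reduced lift\<close>

lemma degree_le_1_eq_pCons: "degree (p::'k::zero poly) \<le> 1 \<Longrightarrow> p = [:coeff p 0, coeff p 1:]"
  by (rule poly_eqI) (auto simp: coeff_pCons coeff_eq_0 split: nat.splits)

lemma cf_deg_spec:
  assumes "degree F \<le> d" "degree (G::'k::field poly) \<le> d"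
  shows "cf_deg d F G \<le> d" "common_factor d F G (cf_deg d F G) (red_quot d F G)"
    "\<And>e q. common_factor d F G e q \<Longrightarrow> e \<le> cf_deg d F G"
proof -
  let ?P = "\<lambda>e. e \<le> d \<and> (\<exists>q. common_factor d F G e q)"
  have "common_factor d F G 0 (F, G)"
    unfolding common_factor_def using assms by (intro exI[of _ 1]) simp
  then have "?P 0" by blast
  moreover have bound: "\<forall>y. ?P y \<longrightarrow> y \<le> d" by blast
  ultimately have "?P (cf_deg d F G)"
    unfolding cf_deg_def by (intro GreatestI_nat[where P = ?P]) blast+
  then show "cf_deg d F G \<le> d" "common_factor d F G (cf_deg d F G) (red_quot d F G)"
    unfolding red_quot_def by (auto intro: someI_ex)
  fix e q assume "common_factor d F G e q"
  then have "?P e" unfolding common_factor_def by blast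
  with bound show "e \<le> cf_deg d F G" unfolding cf_deg_def by (intro Greatest_le_nat[where P = ?P]) blast+
qed

lemma common_factor_Suc:
  fixes F G :: "'k::field poly"
  assumes cf: "common_factor d F G e (Q1, Q2)" and "e < d"
    and roots: "poly Q1 v = 0" "poly Q2 v = 0"
  shows "\<exists>q. common_factor d F G (Suc e) q"
proof -
  obtain h where h: "h \<noteq> 0" "degree h \<le> e" "degree Q1 \<le> d - e" "degree Q2 \<le> d - e"
    "F = h * Q1" "G = h * Q2"
    using cf unfolding common_factor_def by auto
  obtain R1 R2 where R: "Q1 = [:-v, 1:] * R1" "Q2 = [:-v, 1:] * R2"
    using roots by (metis dvdE poly_eq_0_iff_dvd)
  have deg_R: "degree R \<le> d - Suc e" if "Q = [:-v, 1:] * R" "degree Q \<le> d - e" for Q R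
  proof (cases "R = 0")
    case False
    then have "degree ([:-v, 1:] * R) = degree [:-v, 1:] + degree R" by (intro degree_mult_eq) auto
    with that show ?thesis by simp
  qed simp
  have "common_factor d F G (Suc e) (R1, R2)"
    unfolding common_factor_def
  proof (intro exI[of _ "h * [:-v, 1:]"] conjI)
    have "[:-v, 1:] \<noteq> (0::'k poly)" by simp
    with h(1) show "h * [:-v, 1:] \<noteq> 0" by (metis mult_eq_0_iff)
    show "degree (h * [:-v, 1:]) \<le> Suc e" using degree_mult_le[of h "[:-v, 1:]"] h(2) by simp
    show "F = h * [:-v, 1:] * fst (R1, R2)" using h(5) R(1) by (simp only: fst_conv mult.assoc)
    show "G = h * [:-v, 1:] * snd (R1, R2)" using h(6) R(2) by (simp only: snd_conv mult.assoc)
  qed (use \<open>e < d\<close> deg_R R h in auto)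
  then show ?thesis ..
qed

lemma map_eval_Inf_eq: "map_eval d f g Inf = Inf \<longleftrightarrow> coeff g d = 0"
  unfolding map_eval_def form_eval_def by simp

lemma map_eval_Fin_eq:
  "poly g z \<noteq> 0 \<Longrightarrow> map_eval d f g (Fin z) = Fin (poly f z / poly g z)"
  unfolding map_eval_def form_eval_def by simp

locale quadratic_pair =
  fixes f0 f1 f2 g0 g1 :: "'k::field"
  assumes nonzero: "[:f0, f1, f2:] \<noteq> 0 \<or> [:g0, g1:] \<noteq> 0"
begin

abbreviation "F \<equiv> [:f0, f1, f2:]"
abbreviation "G \<equiv> [:g0, g1:]"
abbreviation "cf \<equiv> cf_deg 2 F G"
abbreviation "rmap \<equiv> (case red_quot 2 F G of (Q1, Q2) \<Rightarrow> map_eval (2 - cf) Q1 Q2)"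

lemma degree_F: "degree F \<le> 2"
  by (simp add: degree_pCons_le)

lemma degree_G: "degree G \<le> 2"
  by (rule order.trans[OF degree_pCons_le]) (simp add: degree_pCons_le)

lemma cf_le_2: "cf \<le> 2"
  using cf_deg_spec(1)[OF degree_F degree_G] .

lemma le_cf: "common_factor 2 F G e q \<Longrightarrow> e \<le> cf"
  using cf_deg_spec(3)[OF degree_F degree_G] .

lemma common_factor_red_quot: "common_factor 2 F G cf (red_quot 2 F G)"
  using cf_deg_spec(2)[OF degree_F degree_G] .

lemma cancelled_form:
  obtains h Q1 Q2 where "red_quot 2 F G = (Q1, Q2)" "h \<noteq> 0" "degree h \<le> cf"
    "degree Q1 \<le> 2 - cf" "degree Q2 \<le> 2 - cf" "F = h * Q1" "G = h * Q2"
    "rmap = map_eval (2 - cf) Q1 Q2"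
proof -
  obtain Q1 Q2 where "red_quot 2 F G = (Q1, Q2)" by (cases "red_quot 2 F G")
  with common_factor_red_quot that show ?thesis unfolding common_factor_def by auto
qed

lemma cancelled_form_linear:
  assumes "cf = 1"
  obtains h0 h1 q0 q1 p0 p1 where "red_quot 2 F G = ([:q0, q1:], [:p0, p1:])"
    "h0 \<noteq> 0 \<or> h1 \<noteq> 0" "rmap = map_eval 1 [:q0, q1:] [:p0, p1:]"
    "f0 = h0 * q0" "f1 = h0 * q1 + h1 * q0" "f2 = h1 * q1"
    "g0 = h0 * p0" "g1 = h0 * p1 + h1 * p0" "h1 * p1 = 0"
proof -
  obtain h Q1 Q2 where q: "red_quot 2 F G = (Q1, Q2)" "h \<noteq> 0" "degree h \<le> cf"
    "degree Q1 \<le> 2 - cf" "degree Q2 \<le> 2 - cf" "F = h * Q1" "G = h * Q2"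
    "rmap = map_eval (2 - cf) Q1 Q2"
    by (rule cancelled_form)
  define h0 h1 q0 q1 p0 p1 where "h0 = coeff h 0" "h1 = coeff h 1" "q0 = coeff Q1 0"
    "q1 = coeff Q1 1" "p0 = coeff Q2 0" "p1 = coeff Q2 1"
  have H: "h = [:h0, h1:]" "Q1 = [:q0, q1:]" "Q2 = [:p0, p1:]"
    using q(3-5) assms degree_le_1_eq_pCons unfolding h0_h1_q0_q1_p0_p1_def by auto
  have "f0 = h0 * q0" "f1 = h0 * q1 + h1 * q0" "f2 = h1 * q1"
    "g0 = h0 * p0" "g1 = h0 * p1 + h1 * p0" "h1 * p1 = 0"
    using q(6,7) unfolding H by (simp_all add: algebra_simps)
  moreover have "h0 \<noteq> 0 \<or> h1 \<noteq> 0" using q(2) H(1) by auto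
  moreover have "red_quot 2 F G = ([:q0, q1:], [:p0, p1:])" "rmap = map_eval 1 [:q0, q1:] [:p0, p1:]"
    using q(1,8) assms unfolding H by simp_all
  ultimately show ?thesis using that by blast
qed

lemma cf_eq_2_if_G_eq_0: "g0 = 0 \<Longrightarrow> g1 = 0 \<Longrightarrow> cf = 2"
proof -
  assume "g0 = 0" "g1 = 0"
  then have "common_factor 2 F G 2 (1, 0)"
    unfolding common_factor_def using nonzero by (intro exI[of _ F]) (simp add: degree_F)
  then show ?thesis using le_cf cf_le_2 by fastforce
qed

lemma proportional_if_cf_eq_2:
  assumes "cf = 2"
  obtains q1 q2 where "q1 \<noteq> 0 \<or> q2 \<noteq> 0" "smult q2 F = smult q1 G"
proof -
  obtain h Q1 Q2 where q: "h \<noteq> 0" "degree Q1 \<le> 0" "degree Q2 \<le> 0" "F = h * Q1" "G = h * Q2"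
    using cancelled_form assms by (metis diff_self_eq_0)
  define c1 c2 where "c1 = coeff Q1 0" "c2 = coeff Q2 0"
  have Q: "Q1 = [:c1:]" "Q2 = [:c2:]"
    using q(2,3) degree_0_id[of Q1] degree_0_id[of Q2] unfolding c1_c2_def by auto
  have "smult c2 F = smult c1 G"
    using q(4,5) unfolding Q by (simp add: mult.commute)
  moreover have "c1 \<noteq> 0 \<or> c2 \<noteq> 0"
    using nonzero q(4,5) unfolding Q by auto
  ultimately show ?thesis using that by blast
qed

lemma cf_neq_2_if_f2_neq_0: "f2 \<noteq> 0 \<Longrightarrow> g0 \<noteq> 0 \<or> g1 \<noteq> 0 \<Longrightarrow> cf \<noteq> 2"
proof
  assume a: "f2 \<noteq> 0" "g0 \<noteq> 0 \<or> g1 \<noteq> 0" "cf = 2"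
  obtain q1 q2 where q: "q1 \<noteq> 0 \<or> q2 \<noteq> 0" "smult q2 F = smult q1 G"
    using proportional_if_cf_eq_2[OF a(3)] by blast
  from q(2) have "q2 * f2 = 0" "q2 * f1 = q1 * g1" "q2 * f0 = q1 * g0" by auto
  with a q(1) show False by auto
qed

lemma cf_neq_2_at_fixed_point:
  assumes fixed: "f0 + v * (f1 + v * f2) = v * (g0 + v * g1)" and "g0 + v * g1 \<noteq> 0"
    and "f1 + 2 * f2 * v - v * g1 \<noteq> 0"
  shows "cf \<noteq> 2"
proof
  assume "cf = 2"
  obtain q1 q2 where q: "q1 \<noteq> 0 \<or> q2 \<noteq> 0" "smult q2 F = smult q1 G"
    using proportional_if_cf_eq_2[OF \<open>cf = 2\<close>] by blast
  from q(2) have e: "q2 * f2 = 0" "q2 * f1 = q1 * g1" "q2 * f0 = q1 * g0" by auto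
  have "q2 * (f0 + v * (f1 + v * f2)) = q2 * f0 + v * (q2 * f1) + v * v * (q2 * f2)"
    by (simp add: algebra_simps)
  also have "\<dots> = q1 * (g0 + v * g1)" by (simp only: e) (simp add: algebra_simps)
  finally have "q2 * (f0 + v * (f1 + v * f2)) = q1 * (g0 + v * g1)" .
  with fixed have "(q2 * v - q1) * (g0 + v * g1) = 0" by (simp add: algebra_simps)
  with assms(2) have q1: "q1 = q2 * v" by simp
  with q(1) e(1) have "q2 \<noteq> 0" "f2 = 0" by auto
  moreover have "q2 * f1 = q2 * (v * g1)" using e(2) q1 by (simp add: algebra_simps)
  ultimately show False using assms(3) by simp
qed

abbreviation "resultant \<equiv> f2 * g0^2 - f1 * g0 * g1 + f0 * g1^2"

lemma f2_neq_0_if_cf_eq_0: "cf = 0 \<Longrightarrow> f2 \<noteq> 0"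
proof
  assume "cf = 0" "f2 = 0"
  then have "common_factor 2 F G 1 (F, G)"
    unfolding common_factor_def by (intro exI[of _ 1]) (simp add: degree_pCons_le)
  with \<open>cf = 0\<close> show False using le_cf by fastforce
qed

lemma resultant_neq_0_if_cf_eq_0:
  assumes cf0: "cf = 0"
  shows "resultant \<noteq> 0"
proof
  assume res: "resultant = 0"
  have "f2 \<noteq> 0" using f2_neq_0_if_cf_eq_0 cf0 .
  show False
  proof (cases "g1 = 0")
    case True
    with res \<open>f2 \<noteq> 0\<close> have "g0 = 0" by simp
    with True cf_eq_2_if_G_eq_0 cf0 show False by simp
  next
    case False
    define v where "v = - g0 / g1"
    have "(f0 + v * (f1 + v * f2)) * g1^2 = resultant"
      using False unfolding v_def by (simp add: field_simps power2_eq_square)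
    with res False have f0: "f0 = - (v * (f1 + v * f2))" by (simp add: eq_neg_iff_add_eq_0)
    have "common_factor 2 F G 1 ([:f1 + f2 * v, f2:], [:g1:])"
      unfolding common_factor_def
    proof (intro exI[of _ "[:-v, 1:]"] conjI)
      show "F = [:-v, 1:] * fst ([:f1 + f2 * v, f2:], [:g1:])" using f0 by (simp add: algebra_simps)
      show "G = [:-v, 1:] * snd ([:f1 + f2 * v, f2:], [:g1:])"
        using False unfolding v_def by (simp add: field_simps)
    qed (auto simp: degree_pCons_le)
    with cf0 show False using le_cf by fastforce
  qed
qed

lemma moved_Inf: "cf \<le> 1 \<Longrightarrow> rmap Inf \<noteq> Inf \<Longrightarrow> f2 = 0 \<and> g1 \<noteq> 0"
proof -
  assume cf1: "cf \<le> 1" and moved: "rmap Inf \<noteq> Inf"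
  show ?thesis
  proof (cases "cf = 0")
    case True
    obtain h Q1 Q2 where q: "h \<noteq> 0" "degree h \<le> 0" "G = h * Q2" "rmap = map_eval 2 Q1 Q2"
      using cancelled_form True by (metis diff_zero)
    then obtain c where "h = [:c:]" "c \<noteq> 0" using degree_0_id[of h] by (metis le_zero_eq pCons_0_0)
    moreover have "coeff G 2 = coeff (h * Q2) 2" using q(3) by (rule arg_cong)
    ultimately have "coeff Q2 2 = 0" by (simp add: numeral_2_eq_2)
    with moved q(4) show ?thesis by (simp add: map_eval_Inf_eq)
  next
    case False
    with cf1 have "cf = 1" by simp
    then obtain h0 h1 q0 q1 p0 p1 where q: "h0 \<noteq> 0 \<or> h1 \<noteq> 0" "rmap = map_eval 1 [:q0, q1:] [:p0, p1:]"
      "f2 = h1 * q1" "g1 = h0 * p1 + h1 * p0" "h1 * p1 = 0"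
      by (rule cancelled_form_linear)
    with moved have "p1 \<noteq> 0" by (simp add: map_eval_Inf_eq)
    with q show ?thesis by auto
  qed
qed

text \<open>Otherwise the quotients would fix $v$ or share the root $v$, so that a larger common factor
  could be cancelled.\<close>

lemma common_factor_root_at_moved_point:
  assumes cf1: "cf \<le> 1" and fixed: "poly F v = v * poly G v" and moved: "rmap (Fin v) \<noteq> Fin v"
    and q: "red_quot 2 F G = (Q1, Q2)" "F = h * Q1" "G = h * Q2"
  shows "poly h v = 0"
proof (rule ccontr)
  assume hv: "poly h v \<noteq> 0"
  have "poly h v * poly Q1 v = poly h v * (v * poly Q2 v)"
    using fixed unfolding q(2,3) by (simp add: algebra_simps)
  with hv have Q1v: "poly Q1 v = v * poly Q2 v" by simp
  have Q2v: "poly Q2 v = 0"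
  proof (rule ccontr)
    assume "poly Q2 v \<noteq> 0"
    then have "rmap (Fin v) = Fin v" using Q1v q(1) by (simp add: map_eval_Fin_eq)
    with moved show False by simp
  qed
  have "common_factor 2 F G cf (Q1, Q2)" using common_factor_red_quot q(1) by simp
  then obtain r where "common_factor 2 F G (Suc cf) r"
    using common_factor_Suc[of 2 F G cf Q1 Q2 v] cf1 Q1v Q2v by auto
  then show False using le_cf by fastforce
qed

lemma cf_eq_1_at_moved_point:
  assumes cf1: "cf \<le> 1" and fixed: "poly F v = v * poly G v" and moved: "rmap (Fin v) \<noteq> Fin v"
  shows "cf = 1"
proof (rule ccontr)
  assume "cf \<noteq> 1"
  with cf1 have "cf = 0" by simp
  obtain h Q1 Q2 where q: "red_quot 2 F G = (Q1, Q2)" "h \<noteq> 0" "degree h \<le> cf" "F = h * Q1" "G = h * Q2"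
    by (rule cancelled_form)
  have "h = [:coeff h 0:]" using q(3) \<open>cf = 0\<close> degree_0_id[of h] by auto
  then have "poly h v = coeff h 0" by (metis poly_pCons poly_0 mult_zero_right add_0_right)
  moreover have "poly h v = 0" using common_factor_root_at_moved_point[OF cf1 fixed moved q(1,4,5)] .
  ultimately show False using q(2) \<open>h = [:coeff h 0:]\<close> by (metis pCons_0_0)
qed

lemma moved_point_form:
  assumes cf1: "cf \<le> 1" and fixed: "poly F v = v * poly G v" and moved: "rmap (Fin v) \<noteq> Fin v"
  obtains h1 q0 q1 p0 where "h1 \<noteq> 0" "q1 \<noteq> 0" "p0 \<noteq> 0" "rmap = map_eval 1 [:q0, q1:] [:p0:]"
    "f0 = - (v * h1) * q0" "f1 = - (v * h1) * q1 + h1 * q0" "f2 = h1 * q1"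
    "g0 = - (v * h1) * p0" "g1 = h1 * p0"
proof -
  have cf: "cf = 1" using cf_eq_1_at_moved_point[OF assms] .
  then obtain h0 h1 q0 q1 p0 p1 where q: "red_quot 2 F G = ([:q0, q1:], [:p0, p1:])"
    "h0 \<noteq> 0 \<or> h1 \<noteq> 0" "rmap = map_eval 1 [:q0, q1:] [:p0, p1:]"
    "f0 = h0 * q0" "f1 = h0 * q1 + h1 * q0" "f2 = h1 * q1"
    "g0 = h0 * p0" "g1 = h0 * p1 + h1 * p0" "h1 * p1 = 0"
    by (rule cancelled_form_linear)
  have FG: "F = [:h0, h1:] * [:q0, q1:]" "G = [:h0, h1:] * [:p0, p1:]"
    using q(4-9) by (simp_all add: algebra_simps)
  then have "poly [:h0, h1:] v = 0" using common_factor_root_at_moved_point[OF cf1 fixed moved q(1)] by blast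
  then have h0: "h0 = - (v * h1)" by (simp add: eq_neg_iff_add_eq_0)
  with q(2) have "h1 \<noteq> 0" by auto
  with q(9) have "p1 = 0" by simp
  have "p0 \<noteq> 0"
  proof
    assume "p0 = 0"
    with q(7,8) \<open>p1 = 0\<close> have "cf = 2" by (intro cf_eq_2_if_G_eq_0) simp_all
    with cf show False by simp
  qed
  have "q1 \<noteq> 0"
  proof
    assume "q1 = 0"
    have "common_factor 2 F G 2 ([:q0:], [:p0:])"
      unfolding common_factor_def
      by (rule exI[of _ "[:h0, h1:]"]) (use FG \<open>q1 = 0\<close> \<open>p1 = 0\<close> \<open>h1 \<noteq> 0\<close> in simp)
    with cf show False using le_cf by fastforce
  qed
  have rm: "rmap = map_eval 1 [:q0, q1:] [:p0:]" using q(3) \<open>p1 = 0\<close> by simp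
  have e: "f0 = - (v * h1) * q0" "f1 = - (v * h1) * q1 + h1 * q0" "g0 = - (v * h1) * p0"
    "g1 = h1 * p0"
    using q(4,5,7,8) h0 \<open>p1 = 0\<close> by simp_all
  show ?thesis by (rule that[OF \<open>h1 \<noteq> 0\<close> \<open>q1 \<noteq> 0\<close> \<open>p0 \<noteq> 0\<close> rm e(1,2) q(6) e(3,4)])
qed

lemma moved_fixed_point:
  assumes cf1: "cf \<le> 1" and fixed: "f0 + v * (f1 + v * f2) = v * (g0 + v * g1)"
    and moved: "rmap (Fin v) \<noteq> Fin v"
  shows "g0 + v * g1 = 0" "f1 + 2 * f2 * v - v * g1 \<noteq> 0" "f2 \<noteq> 0" "g1 \<noteq> 0"
    "rmap Inf = Inf" "\<exists>\<beta>. \<forall>y. rmap (Fin y) = Fin (f2 / g1 * y + \<beta>)"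
proof -
  have "poly F v = v * poly G v" using fixed by simp
  then obtain h1 q0 q1 p0 where q: "h1 \<noteq> 0" "q1 \<noteq> 0" "p0 \<noteq> 0" "rmap = map_eval 1 [:q0, q1:] [:p0:]"
    "f0 = - (v * h1) * q0" "f1 = - (v * h1) * q1 + h1 * q0" "f2 = h1 * q1"
    "g0 = - (v * h1) * p0" "g1 = h1 * p0"
    by (rule moved_point_form[OF cf1 _ moved])
  have rmap_Fin: "rmap (Fin y) = Fin (q1 / p0 * y + q0 / p0)" for y
    using q(3,4) by (simp add: map_eval_Fin_eq add_divide_distrib)
  show "g0 + v * g1 = 0" using q(8,9) by (simp add: algebra_simps)
  show "f2 \<noteq> 0" "g1 \<noteq> 0" using q(1-3,7,9) by simp_all
  show "rmap Inf = Inf" using q(4) by (simp add: map_eval_Inf_eq)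
  show "\<exists>\<beta>. \<forall>y. rmap (Fin y) = Fin (f2 / g1 * y + \<beta>)"
    using rmap_Fin q(1,7,9) by auto
  have "q1 / p0 * v + q0 / p0 \<noteq> v" using moved rmap_Fin[of v] by auto
  then have "q0 + v * q1 \<noteq> v * p0" using q(3) by (auto simp: field_simps)
  moreover have "f1 + 2 * f2 * v - v * g1 = h1 * (q0 + v * q1 - v * p0)"
    using q(6,7,9) by (simp add: algebra_simps)
  ultimately show "f1 + 2 * f2 * v - v * g1 \<noteq> 0" using q(1) by simp
qed

end

section \<open>Affine maps up to conjugacy\<close>

lemma mob_affine_Fin [simp]: "mob p q 0 1 (Fin z) = Fin (p * z + q)"
  unfolding mob_def map_eval_def form_eval_def by (simp add: algebra_simps)

lemma mob_affine_Inf [simp]: "mob p q 0 1 Inf = Inf"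
  unfolding mob_def map_eval_def form_eval_def by simp

text \<open>An affine map with multiplier $\alpha \neq 1$ has a finite fixed point; translating it to $0$
  conjugates the map to $z \mapsto \alpha z$.\<close>

lemma conj_over_affine:
  fixes m :: "'b::field P1 \<Rightarrow> 'b P1"
  assumes "m Inf = Inf" "\<And>y. m (Fin y) = Fin (\<alpha> * y + \<beta>)" "\<alpha> \<noteq> 1"
  shows "conj_over m (mob \<alpha> 0 0 1)"
  unfolding conj_over_def
proof (intro exI conjI allI)
  define y0 where "y0 = \<beta> / (1 - \<alpha>)"
  have "\<alpha> * y0 + \<beta> = y0" unfolding y0_def using assms(3) by (simp add: field_simps)
  then have "\<alpha> * (z + y0) + \<beta> = \<alpha> * z + y0" for z by (simp add: algebra_simps)
  then show "m (mob 1 y0 0 1 x) = mob 1 y0 0 1 (mob \<alpha> 0 0 1 x)" for x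
    using assms(1,2) by (cases x) simp_all
qed simp

lemma conj_over_translation:
  fixes m :: "'b::field P1 \<Rightarrow> 'b P1"
  assumes "m Inf = Inf" "\<And>y. m (Fin y) = Fin (y + \<beta>)"
  shows "conj_over m (mob 1 \<beta> 0 1)"
  unfolding conj_over_def
proof (intro exI conjI allI)
  show "m (mob 1 0 0 1 x) = mob 1 0 0 1 (mob 1 \<beta> 0 1 x)" for x
    using assms by (cases x) (simp_all add: add.commute)
qed simp

section \<open>The family $\varphi(z) = (z^2 + \lambda_1 z) / (\lambda_2 z + 1)$\<close>

locale phi_params =
  fixes l1 l2 :: "'a::field"
  assumes l1_l2_neq_1: "l1 * l2 \<noteq> 1" and l2_neq_1: "l2 \<noteq> 1"
begin

abbreviation "f \<equiv> phi_f l1"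
abbreviation "g \<equiv> phi_g l2"

definition "alpha3 = (l1 - 1) / (l2 - 1)"

lemma l2_minus_1_neq_0: "l2 - 1 \<noteq> 0"
  using l2_neq_1 by simp

lemma alpha3_fixed: "alpha3 * (l2 - 1) = l1 - 1"
  unfolding alpha3_def using l2_minus_1_neq_0 by simp

lemma denominator_at_alpha3: "1 + l2 * alpha3 = (l1 * l2 - 1) / (l2 - 1)"
  unfolding alpha3_def using l2_minus_1_neq_0 by (simp add: field_simps)

lemma denominator_at_alpha3_neq_0: "1 + l2 * alpha3 \<noteq> 0"
  using l1_l2_neq_1 l2_minus_1_neq_0 denominator_at_alpha3 by simp

lemma numerator_at_alpha3: "l1 + alpha3 * (2 - l2) = (l1 + l2 - 2) / (l2 - 1)"
  unfolding alpha3_def using l2_minus_1_neq_0 by (simp add: field_simps)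

lemma clfix_phi: "clfix 2 f g = {Fin 0, Fin alpha3, Inf}"
proof -
  have "map_eval 2 f g (Fin z) = Fin z \<longleftrightarrow> z = 0 \<or> z = alpha3" for z
  proof (cases "1 + l2 * z = 0")
    case True
    then have "z \<noteq> 0" "z \<noteq> alpha3" using denominator_at_alpha3_neq_0 by auto
    with True show ?thesis unfolding map_eval_def form_eval_def phi_g_def by (simp add: algebra_simps)
  next
    case False
    then have "map_eval 2 f g (Fin z) = Fin z \<longleftrightarrow> z * z + l1 * z = z * (1 + l2 * z)"
      unfolding map_eval_def form_eval_def phi_f_def phi_g_def by (auto simp: field_simps)
    moreover have "z * z + l1 * z - z * (1 + l2 * z) = - (z * (z * (l2 - 1) - (l1 - 1)))"
      by (simp add: algebra_simps)
    then have "z * z + l1 * z = z * (1 + l2 * z) \<longleftrightarrow> z = 0 \<or> z * (l2 - 1) = l1 - 1"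
      by (metis right_minus_eq neg_equal_0_iff_equal mult_eq_0_iff)
    moreover have "z * (l2 - 1) = l1 - 1 \<longleftrightarrow> z = alpha3"
      unfolding alpha3_def using l2_minus_1_neq_0 by (simp add: eq_divide_eq)
    ultimately show ?thesis by simp
  qed
  moreover have "map_eval 2 f g Inf = Inf"
    unfolding map_eval_def form_eval_def phi_g_def by (simp add: numeral_2_eq_2)
  ultimately have "x \<in> clfix 2 f g \<longleftrightarrow> x \<in> {Fin 0, Fin alpha3, Inf}" for x
    unfolding clfix_def by (cases x) auto
  then show ?thesis by blast
qed

lemma multiplier_alpha3: "fin_multiplier f g alpha3 = (l1 + alpha3 * (2 - l2)) / (1 + l2 * alpha3)"
proof -
  have fx: "alpha3 * alpha3 + l1 * alpha3 = alpha3 * (1 + l2 * alpha3)"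
    using alpha3_fixed by (simp add: algebra_simps)
  have "fin_multiplier f g alpha3
      = ((l1 + 2 * alpha3) * (1 + l2 * alpha3) - (alpha3 * alpha3 + l1 * alpha3) * l2) / (1 + l2 * alpha3)^2"
    unfolding fin_multiplier_def phi_f_def phi_g_def by (simp add: pderiv_pCons algebra_simps)
  also have "\<dots> = ((1 + l2 * alpha3) * (l1 + alpha3 * (2 - l2))) / (1 + l2 * alpha3)^2"
    unfolding fx by (simp add: algebra_simps)
  also have "\<dots> = (l1 + alpha3 * (2 - l2)) / (1 + l2 * alpha3)"
    using denominator_at_alpha3_neq_0 by (simp add: power2_eq_square)
  finally show ?thesis .
qed

definition "A0 a = a * (a * (1 - l2) + l1 - 1)"
definition "A1 a c = c * (l1 + a * (2 - l2))"
definition "A2 (c::'a) = c^2"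
definition "B0 a c = c * (1 + l2 * a)"
definition "B1 (c::'a) = l2 * c^2"

lemma conj_lift_phi: "conj_lift f g a c = ([:A0 a, A1 a c, A2 c:], [:B0 a c, B1 c:])"
  unfolding conj_lift_def phi_f_def phi_g_def A0_def A1_def A2_def B0_def B1_def
  by (simp add: pcompose_pCons algebra_simps power2_eq_square)

lemma fixed_point_equation: "x = 0 \<or> x = alpha3 \<Longrightarrow> x * ((1 - l2) * x + (l1 - 1)) = 0"
proof -
  have "(1 - l2) * alpha3 + (l1 - 1) = l1 - 1 - alpha3 * (l2 - 1)" by (simp add: algebra_simps)
  with alpha3_fixed have "(1 - l2) * alpha3 + (l1 - 1) = 0" by simp
  then show "x = 0 \<or> x = alpha3 \<Longrightarrow> ?thesis" by auto
qed

lemma lift_at_point: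
  fixes a c x :: 'a
  assumes "c \<noteq> 0"
  defines "w \<equiv> (x - a) / c"
  shows "A0 a + w * (A1 a c + w * A2 c) - w * (B0 a c + w * B1 c) = x * ((1 - l2) * x + (l1 - 1))"
    "B0 a c + w * B1 c = c * (1 + l2 * x)"
    "A1 a c + 2 * A2 c * w - w * B1 c = c * (l1 + x * (2 - l2))"
  unfolding w_def A0_def A1_def A2_def B0_def B1_def using assms(1)
  by (simp_all add: field_simps power2_eq_square)

lemma lift_resultant: "A2 c * (B0 a c)^2 - A1 a c * B0 a c * B1 c + A0 a * (B1 c)^2 = c^4 * (1 - l1 * l2)"
  unfolding A0_def A1_def A2_def B0_def B1_def
  by (simp add: algebra_simps power2_eq_square power4_eq_xxxx)

end

section \<open>The reduction at a type II point\<close>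

lemma rep_spec:
  assumes "D \<in> typeII absv" "rep absv D = (a, c)"
  shows "c \<noteq> 0" "D = disc absv a (absv c)"
proof -
  from assms(1) obtain a' c' where "c' \<noteq> 0" "D = disc absv a' (absv c')" unfolding typeII_def by blast
  then have "\<exists>ac. snd ac \<noteq> 0 \<and> D = disc absv (fst ac) (absv (snd ac))" by (intro exI[of _ "(a', c')"]) simp
  from someI_ex[OF this] assms(2) show "c \<noteq> 0" "D = disc absv a (absv c)" unfolding rep_def by auto
qed

lemma weight_nonzero_typeII: "weight absv red d f g D \<noteq> 0 \<Longrightarrow> D \<in> typeII absv"
  unfolding weight_def fixedII_def branch_GammaFix_def by (auto split: if_splits)

locale phi_valued = residue_field absv red + phi_params l1 l2
  for absv :: "'a::field \<Rightarrow> real" and red :: "'a \<Rightarrow> 'k::field" and l1 l2 :: 'a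
begin

lemma absv_alpha3: "absv alpha3 = absv (l1 - 1) / absv (l2 - 1)"
  unfolding alpha3_def by simp

lemma absv_A0_le: "absv l2 \<le> 1 \<Longrightarrow> absv a \<le> R \<Longrightarrow> absv (A0 a) \<le> R * max R (absv (l1 - 1))"
proof -
  assume l2: "absv l2 \<le> 1" and aR: "absv a \<le> R"
  have "absv (a * (1 - l2)) \<le> R * 1" using absv_diff_le[of 1 1 l2] l2 by (intro absv_mult_le[OF aR]) simp
  then have "absv (a * (1 - l2) + (l1 - 1)) \<le> max R (absv (l1 - 1))" using absv_add_le_max by simp
  then have "absv a * absv (a * (1 - l2) + (l1 - 1)) \<le> R * max R (absv (l1 - 1))"
    using aR by (intro mult_mono) (auto intro: order_trans[OF absv_nonneg aR])
  then show ?thesis by (simp only: A0_def absv_mult add_diff_eq)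
qed

lemma absv_A1_le: "absv l2 \<le> 1 \<Longrightarrow> absv a \<le> R \<Longrightarrow> absv (A1 a c) \<le> absv c * max (absv l1) R"
proof -
  assume l2: "absv l2 \<le> 1" and aR: "absv a \<le> R"
  have "absv (a * (2 - l2)) \<le> R * 1"
    using absv_diff_le[OF absv_two_le l2] by (intro absv_mult_le[OF aR]) simp
  then have "absv (l1 + a * (2 - l2)) \<le> max (absv l1) R" using absv_add_le_max[of l1 "absv l1"] by simp
  then show ?thesis unfolding A1_def by (simp add: mult_left_mono)
qed

lemma absv_B0_le: "absv l2 \<le> 1 \<Longrightarrow> absv a \<le> R \<Longrightarrow> absv (B0 a c) \<le> absv c * max 1 R"
proof -
  assume l2: "absv l2 \<le> 1" and aR: "absv a \<le> R"
  have "absv (l2 * a) \<le> 1 * R" by (rule absv_mult_le[OF l2 aR])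
  then have "absv (1 + l2 * a) \<le> max 1 R" using absv_add_le_max[of 1 1] by simp
  then show ?thesis unfolding B0_def by (simp add: mult_left_mono)
qed

lemma absv_B1_le: "absv l2 \<le> 1 \<Longrightarrow> absv (B1 c) \<le> absv c ^ 2"
  unfolding B1_def by (simp add: mult_left_le_one_le)

end

locale phi_at_disc = phi_valued absv red l1 l2
  for absv :: "'a::field \<Rightarrow> real" and red :: "'a \<Rightarrow> 'k::field" and l1 l2 :: 'a +
  fixes D :: "'a set" and a c :: 'a
  assumes typeII: "D \<in> typeII absv" and rep: "rep absv D = (a, c)"
begin

lemma c_neq_0: "c \<noteq> 0" and D_eq: "D = disc absv a (absv c)"
  using rep_spec[OF typeII rep] by auto

lemma absv_c_pos: "absv c > 0"
  using absv_pos[OF c_neq_0] .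

definition "t = norm_scalar absv (conj_lift f g a c)"

lemma t_spec:
  "t \<noteq> 0" "absv (t * A0 a) \<le> 1" "absv (t * A1 a c) \<le> 1" "absv (t * A2 c) \<le> 1"
  "absv (t * B0 a c) \<le> 1" "absv (t * B1 c) \<le> 1"
  "absv (t * A0 a) = 1 \<or> absv (t * A1 a c) = 1 \<or> absv (t * A2 c) = 1 \<or>
   absv (t * B0 a c) = 1 \<or> absv (t * B1 c) = 1"
proof -
  have "A2 c \<noteq> 0" unfolding A2_def using c_neq_0 by simp
  then have "fst (conj_lift f g a c) \<noteq> 0" unfolding conj_lift_phi by simp
  then have spec: "t \<noteq> 0" "\<forall>x\<in>all_coeffs (conj_lift f g a c). absv (t * x) \<le> 1"
    "\<exists>x\<in>all_coeffs (conj_lift f g a c). absv (t * x) = 1"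
    using norm_scalar_spec unfolding t_def by blast+
  then show "t \<noteq> 0" by simp
  show "absv (t * A0 a) \<le> 1" "absv (t * A1 a c) \<le> 1" "absv (t * A2 c) \<le> 1"
    "absv (t * B0 a c) \<le> 1" "absv (t * B1 c) \<le> 1"
    using spec(2) all_coeffs_pair(1)[of "A0 a" "A1 a c" "A2 c" "B0 a c" "B1 c"]
    unfolding conj_lift_phi by blast+
  show "absv (t * A0 a) = 1 \<or> absv (t * A1 a c) = 1 \<or> absv (t * A2 c) = 1 \<or>
    absv (t * B0 a c) = 1 \<or> absv (t * B1 c) = 1"
    using spec(3) all_coeffs_pair(2)[of "A0 a" "A1 a c" "A2 c" "B0 a c" "B1 c"]
    unfolding conj_lift_phi by (fastforce simp del: absv_mult)
qed

lemma absv_t_pos: "absv t > 0"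
  using absv_pos[OF t_spec(1)] .

lemma in_O_lift_coeffs [simp]:
  "in_O absv (t * A0 a)" "in_O absv (t * A1 a c)" "in_O absv (t * A2 c)"
  "in_O absv (t * B0 a c)" "in_O absv (t * B1 c)"
  using t_spec unfolding in_O_def by auto

definition "f0 = red (t * A0 a)"
definition "f1 = red (t * A1 a c)"
definition "f2 = red (t * A2 c)"
definition "g0 = red (t * B0 a c)"
definition "g1 = red (t * B1 c)"

lemma reduction_nonzero: "[:f0, f1, f2:] \<noteq> 0 \<or> [:g0, g1:] \<noteq> 0"
  using t_spec(7) red_neq_0_iff t_spec(2-6) unfolding f0_def f1_def f2_def g0_def g1_def by auto

sublocale quadratic_pair f0 f1 f2 g0 g1
  using reduction_nonzero by unfold_locales

lemma red_lift_at_D: "red_lift_at absv red f g D = (F, G)"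
proof -
  have "map_poly red (smult t [:A0 a, A1 a c, A2 c:]) = F"
    by (rule poly_eqI) (simp add: coeff_map_poly f0_def f1_def f2_def coeff_pCons split: nat.splits)
  moreover have "map_poly red (smult t [:B0 a c, B1 c:]) = G"
    by (rule poly_eqI) (simp add: coeff_map_poly g0_def g1_def coeff_pCons split: nat.splits)
  moreover have "red_lift_at absv red f g D
      = (map_poly red (smult t (fst (conj_lift f g a c))), map_poly red (smult t (snd (conj_lift f g a c))))"
    unfolding red_lift_at_def rep red_pair_def Let_def t_def by simp
  ultimately show ?thesis unfolding conj_lift_phi by simp
qed

lemma red_deg_at_D: "red_deg_at absv red 2 f g D = 2 - cf"
  unfolding red_deg_at_def red_lift_at_D by simp

lemma fixedII_iff: "fixedII absv red 2 f g D \<longleftrightarrow> cf \<le> 1"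
  unfolding fixedII_def red_deg_at_D using typeII cf_le_2 by auto

lemma red_map_at_D: "red_map_at absv red 2 f g D = rmap"
  unfolding red_map_at_def red_lift_at_D by simp

lemma dir_Inf: "dir absv red D (Cl Inf) = Inf"
  unfolding dir_def rep by simp

lemma dir_Fin: "dir absv red D (Cl (Fin x)) = (if absv (x - a) \<le> absv c then Fin (red ((x - a) / c)) else Inf)"
  unfolding dir_def rep by simp

abbreviation "d0 \<equiv> dir absv red D (Cl (Fin 0))"
abbreviation "d3 \<equiv> dir absv red D (Cl (Fin alpha3))"

lemma fixcl_pts_phi: "fixcl_pts 2 f g = {Cl (Fin 0), Cl (Fin alpha3), Cl Inf}"
  unfolding fixcl_pts_def clfix_phi by simp

lemma valence_fixcl_pts: "valence absv red (fixcl_pts 2 f g) D = card {d0, d3, Inf}"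
proof -
  have "fixcl_pts 2 f g - {T2 D} = fixcl_pts 2 f g" unfolding fixcl_pts_phi by auto
  then show ?thesis unfolding valence_def by (simp add: fixcl_pts_phi dir_Inf)
qed

lemma weight_if_fixed:
  "cf \<le> 1 \<Longrightarrow> weight absv red 2 f g D = int (2 - cf) - 1 + int (card {v \<in> {d0, d3, Inf}. rmap v \<noteq> v})"
  unfolding weight_def fixedII_iff red_deg_at_D N_moved_def red_map_at_D
  by (simp add: fixcl_pts_phi dir_Inf)

lemma weight_if_not_fixed:
  "\<not> cf \<le> 1 \<Longrightarrow> weight absv red 2 f g D =
    (if card {d0, d3, Inf} \<ge> 3 then int (valence absv red (fixrep_pts absv red 2 f g) D) - 2 else 0)"
  unfolding weight_def fixedII_iff branch_GammaFix_def valence_fixcl_pts using typeII by simp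

lemma f2_neq_0_iff: "f2 \<noteq> 0 \<longleftrightarrow> absv t * absv c ^ 2 = 1"
  using red_neq_0_iff[OF t_spec(4)] unfolding f2_def A2_def by simp

lemma g1_neq_0_iff: "g1 \<noteq> 0 \<longleftrightarrow> absv t * absv l2 * absv c ^ 2 = 1"
  using red_neq_0_iff[OF t_spec(6)] unfolding g1_def B1_def by (simp add: mult.assoc)

lemma g1_eq: "absv l2 \<le> 1 \<Longrightarrow> g1 = red l2 * f2"
proof -
  assume "absv l2 \<le> 1"
  have "t * B1 c = l2 * (t * A2 c)" unfolding B1_def A2_def by (simp add: algebra_simps)
  then have "red (t * B1 c) = red (l2 * (t * A2 c))" by (simp only:)
  also have "\<dots> = red l2 * red (t * A2 c)"
    by (rule red_mult) (use \<open>absv l2 \<le> 1\<close> t_spec(4) in auto)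
  finally show ?thesis unfolding g1_def f2_def .
qed

lemma normalisation_bound:
  assumes "absv (A0 a) \<le> K" "absv (A1 a c) \<le> K" "absv (A2 c) \<le> K" "absv (B0 a c) \<le> K" "absv (B1 c) \<le> K"
  shows "absv t * K \<ge> 1"
proof -
  have "absv (t * y) \<le> absv t * K" if "absv y \<le> K" for y using that absv_t_pos by simp
  with assms t_spec(7) show ?thesis by (elim disjE) (fastforce+)
qed

lemma in_O_chart: "absv (x - a) \<le> absv c \<Longrightarrow> in_O absv ((x - a) / c)"
  unfolding in_O_def using absv_c_pos by (simp add: divide_le_eq_1)

lemma reduced_fixed_point:
  assumes x: "x = 0 \<or> x = alpha3" and in_disc: "absv (x - a) \<le> absv c"
  defines "w \<equiv> red ((x - a) / c)"
  shows "f0 + w * (f1 + w * f2) = w * (g0 + w * g1)"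
proof -
  define u where "u = (x - a) / c"
  have "(t * A0 a + u * (t * A1 a c + u * (t * A2 c))) - u * (t * B0 a c + u * (t * B1 c))
      = t * (A0 a + u * (A1 a c + u * A2 c) - u * (B0 a c + u * B1 c))"
    by (simp add: algebra_simps)
  also have "\<dots> = 0"
    unfolding u_def lift_at_point(1)[OF c_neq_0] using fixed_point_equation[OF x] by simp
  finally have "t * A0 a + u * (t * A1 a c + u * (t * A2 c)) = u * (t * B0 a c + u * (t * B1 c))"
    by (simp only: right_minus_eq)
  then have "red (t * A0 a + u * (t * A1 a c + u * (t * A2 c))) = red (u * (t * B0 a c + u * (t * B1 c)))"
    by simp
  then show ?thesis
    using in_O_chart[OF in_disc] unfolding w_def u_def[symmetric] f0_def f1_def f2_def g0_def g1_def by simp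
qed

lemma reduced_denominator:
  assumes in_disc: "absv (x - a) \<le> absv c"
  defines "w \<equiv> red ((x - a) / c)"
  shows "in_O absv (t * c * (1 + l2 * x))" "g0 + w * g1 = red (t * c * (1 + l2 * x))"
proof -
  define u where "u = (x - a) / c"
  have "t * B0 a c + u * (t * B1 c) = t * (B0 a c + u * B1 c)" by (simp add: algebra_simps)
  also have "\<dots> = t * c * (1 + l2 * x)" unfolding u_def lift_at_point(2)[OF c_neq_0] by simp
  finally have e: "t * B0 a c + u * (t * B1 c) = t * c * (1 + l2 * x)" .
  have u: "in_O absv u" unfolding u_def using in_O_chart[OF in_disc] .
  then show "in_O absv (t * c * (1 + l2 * x))" unfolding e[symmetric] by simp
  show "g0 + w * g1 = red (t * c * (1 + l2 * x))"
    using u unfolding e[symmetric] w_def u_def[symmetric] g0_def g1_def by simp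
qed

lemma reduced_derivative:
  assumes in_disc: "absv (x - a) \<le> absv c"
  defines "w \<equiv> red ((x - a) / c)"
  shows "in_O absv (t * c * (l1 + x * (2 - l2)))"
    "f1 + 2 * f2 * w - w * g1 = red (t * c * (l1 + x * (2 - l2)))"
proof -
  define u where "u = (x - a) / c"
  have "t * A1 a c + 2 * (t * A2 c) * u - u * (t * B1 c) = t * (A1 a c + 2 * A2 c * u - u * B1 c)"
    by (simp add: algebra_simps)
  also have "\<dots> = t * c * (l1 + x * (2 - l2))" unfolding u_def lift_at_point(3)[OF c_neq_0] by simp
  finally have e: "t * A1 a c + 2 * (t * A2 c) * u - u * (t * B1 c) = t * c * (l1 + x * (2 - l2))" .
  have u: "in_O absv u" unfolding u_def using in_O_chart[OF in_disc] .
  then show "in_O absv (t * c * (l1 + x * (2 - l2)))" unfolding e[symmetric] by simp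
  show "f1 + 2 * f2 * w - w * g1 = red (t * c * (l1 + x * (2 - l2)))"
    using u unfolding e[symmetric] w_def u_def[symmetric] f1_def f2_def g1_def by (simp add: red_two)
qed

lemma reduced_resultant: "in_O absv (t^3 * c^4 * (1 - l1 * l2))" "resultant = red (t^3 * c^4 * (1 - l1 * l2))"
proof -
  have e: "(t * A2 c) * (t * B0 a c)^2 - (t * A1 a c) * (t * B0 a c) * (t * B1 c) + (t * A0 a) * (t * B1 c)^2
      = t^3 * c^4 * (1 - l1 * l2)"
  proof -
    have "(t * A2 c) * (t * B0 a c)^2 - (t * A1 a c) * (t * B0 a c) * (t * B1 c) + (t * A0 a) * (t * B1 c)^2
        = t^3 * (A2 c * (B0 a c)^2 - A1 a c * B0 a c * B1 c + A0 a * (B1 c)^2)"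
      by (simp add: algebra_simps power2_eq_square power3_eq_cube)
    then show ?thesis unfolding lift_resultant by (simp add: mult.assoc)
  qed
  show "in_O absv (t^3 * c^4 * (1 - l1 * l2))" unfolding e[symmetric] by simp
  show "resultant = red (t^3 * c^4 * (1 - l1 * l2))"
    unfolding e[symmetric] f0_def f1_def f2_def g0_def g1_def by simp
qed

lemma moved_fixed_direction:
  assumes cf1: "cf \<le> 1" and x: "x = 0 \<or> x = alpha3" and in_disc: "absv (x - a) \<le> absv c"
    and moved: "rmap (Fin (red ((x - a) / c))) \<noteq> Fin (red ((x - a) / c))"
  shows "absv l2 = 1" "absv (l1 + x * (2 - l2)) = absv c" "absv (1 + l2 * x) < absv c"
    "f2 \<noteq> 0" "rmap Inf = Inf" "\<exists>\<beta>. \<forall>y. rmap (Fin y) = Fin (f2 / g1 * y + \<beta>)"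
proof -
  note m = moved_fixed_point[OF cf1 reduced_fixed_point[OF x in_disc] moved]
  show "f2 \<noteq> 0" "rmap Inf = Inf" "\<exists>\<beta>. \<forall>y. rmap (Fin y) = Fin (f2 / g1 * y + \<beta>)"
    using m by auto
  have T: "absv t * absv c * absv c = 1" using m(3) f2_neq_0_iff by (simp add: power2_eq_square mult.assoc)
  have "absv t * absv l2 * absv c ^ 2 = 1" using m(4) g1_neq_0_iff by simp
  with T show "absv l2 = 1" by (simp add: power2_eq_square algebra_simps)
  have "absv t * absv c * absv (1 + l2 * x) < 1"
    using m(1) reduced_denominator[OF in_disc] red_eq_0_iff unfolding in_O_def by (metis absv_mult)
  then show "absv (1 + l2 * x) < absv c"
    using T absv_t_pos absv_c_pos by (metis mult_less_cancel_left_pos mult_pos_pos)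
  have "absv t * absv c * absv (l1 + x * (2 - l2)) = 1"
    using m(2) reduced_derivative[OF in_disc] red_neq_0_iff unfolding in_O_def by (metis absv_mult)
  then show "absv (l1 + x * (2 - l2)) = absv c"
    using T absv_t_pos absv_c_pos by (metis mult_cancel_left less_irrefl mult_pos_pos)
qed

lemma Inf_not_moved: "cf \<le> 1 \<Longrightarrow> absv l2 \<le> 1 \<Longrightarrow> rmap Inf = Inf"
  using moved_Inf g1_eq by fastforce

lemma moved_direction_cases:
  assumes cf1: "cf \<le> 1" and l2: "absv l2 \<le> 1" and v: "v \<in> {d0, d3, Inf}" and moved: "rmap v \<noteq> v"
  shows "(absv a \<le> absv c \<and> v = Fin (red ((0 - a) / c)) \<and> absv l2 = 1 \<and> absv l1 = absv c \<and> 1 < absv c)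
       \<or> (absv (alpha3 - a) \<le> absv c \<and> absv l2 = 1 \<and> absv (l1 + alpha3 * (2 - l2)) = absv c
          \<and> absv (1 + l2 * alpha3) < absv c)"
proof -
  have v_Fin: "v = Fin (red ((x - a) / c))" "absv (x - a) \<le> absv c"
    if "v = dir absv red D (Cl (Fin x))" for x
    using that moved Inf_not_moved[OF cf1 l2] dir_Fin[of x] by (auto split: if_splits)
  consider "v = d0" | "v = d3" | "v = Inf" using v by blast
  then show ?thesis
  proof cases
    case 1
    note fx = moved_fixed_direction[of 0, OF cf1 _ v_Fin(2)[OF 1], folded v_Fin(1)[OF 1], OF _ moved]
    show ?thesis using fx v_Fin[OF 1] by simp
  next
    case 2
    note fx = moved_fixed_direction[of alpha3, OF cf1 _ v_Fin(2)[OF 2], folded v_Fin(1)[OF 2], OF _ moved]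
    show ?thesis using fx v_Fin[OF 2] by (simp add: mult.commute)
  next
    case 3
    then show ?thesis using moved Inf_not_moved[OF cf1 l2] by simp
  qed
qed

lemma branch_point_position:
  assumes "card {d0, d3, Inf} \<ge> 3"
  shows "absv a \<le> absv c" "absv (alpha3 - a) \<le> absv c" "absv alpha3 = absv c"
proof -
  have dd: "d0 \<noteq> Inf" "d3 \<noteq> Inf" "d0 \<noteq> d3"
    using assms by (auto simp: card_insert_if split: if_splits)
  show a1: "absv a \<le> absv c" using dd dir_Fin[of 0] by (auto split: if_splits)
  show a2: "absv (alpha3 - a) \<le> absv c" using dd dir_Fin[of alpha3] by (auto split: if_splits)
  have "red ((0 - a) / c) \<noteq> red ((alpha3 - a) / c)" using dd dir_Fin a1 a2 by simp
  then have "\<not> absv ((0 - a) / c - (alpha3 - a) / c) < 1"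
    using red_eq_iff in_O_chart[of 0] in_O_chart[of alpha3] a1 a2 unfolding in_O_def by simp
  moreover have "(0 - a) / c - (alpha3 - a) / c = - (alpha3 / c)" by (simp add: diff_divide_distrib)
  ultimately have "absv alpha3 \<ge> absv c" using absv_c_pos by (simp add: divide_less_eq_1)
  moreover have "absv alpha3 \<le> absv c" using absv_add_le[OF a2 a1] by simp
  ultimately show "absv alpha3 = absv c" by simp
qed

lemma cf_0_valuations:
  assumes "cf = 0"
  shows "absv (1 - l1 * l2) = absv c ^ 2" "absv (A0 a) \<le> absv c ^ 2" "absv (A1 a c) \<le> absv c ^ 2"
    "absv (B0 a c) \<le> absv c ^ 2"
proof -
  have T: "absv t * absv c ^ 2 = 1" using f2_neq_0_if_cf_eq_0[OF assms] f2_neq_0_iff by simp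
  have "absv t ^ 3 * absv c ^ 4 * absv (1 - l1 * l2) = 1"
    using resultant_neq_0_if_cf_eq_0[OF assms] reduced_resultant red_neq_0_iff
    unfolding in_O_def by (metis absv_mult absv_power)
  also have "\<dots> = (absv t * absv c ^ 2) ^ 3" using T by simp
  also have "\<dots> = absv t ^ 3 * absv c ^ 4 * absv c ^ 2"
    by (simp add: power_mult_distrib mult.assoc flip: power_mult power_add)
  finally show "absv (1 - l1 * l2) = absv c ^ 2" using t_spec(1) c_neq_0 by simp
  have le: "absv y \<le> absv c ^ 2" if "absv t * absv y \<le> 1" for y
  proof -
    have "absv t * absv y \<le> absv t * absv c ^ 2" using that T by simp
    then show ?thesis using absv_t_pos by simp
  qed
  show "absv (A0 a) \<le> absv c ^ 2" "absv (A1 a c) \<le> absv c ^ 2" "absv (B0 a c) \<le> absv c ^ 2"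
    using le t_spec(2,3,5) by simp_all
qed

lemma branch_radius: "card {d0, d3, Inf} \<ge> 3 \<Longrightarrow> absv (l1 - 1) = absv c * absv (l2 - 1)"
  using absv_alpha3 branch_point_position(3) l2_minus_1_neq_0 by (simp add: field_simps)

lemma branch_not_fixed_large_radius:
  assumes l1: "absv l1 \<le> 1" and l2: "absv l2 \<le> 1" and br: "card {d0, d3, Inf} \<ge> 3"
    and r: "absv c > 1"
  shows "cf \<noteq> 2"
proof -
  have a: "absv a \<le> absv c" using branch_point_position(1)[OF br] .
  have l1m: "absv (l1 - 1) \<le> 1" using absv_diff_le[of l1 1 1] l1 by simp
  have "absv (A0 a) \<le> absv c ^ 2" "absv (A1 a c) \<le> absv c ^ 2" "absv (A2 c) \<le> absv c ^ 2"
    "absv (B0 a c) \<le> absv c ^ 2" "absv (B1 c) \<le> absv c ^ 2"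
    using absv_A0_le[OF l2 a] absv_A1_le[OF l2 a, of c] absv_B0_le[OF l2 a, of c] absv_B1_le[OF l2, of c]
      l1m l1 r by (simp_all add: A2_def max_def power2_eq_square)
  then have "absv t * absv c ^ 2 \<ge> 1" by (rule normalisation_bound)
  moreover have "absv t * absv c ^ 2 \<le> 1" using t_spec(4) unfolding A2_def by simp
  ultimately have T: "absv t * absv c ^ 2 = 1" by simp
  have "absv (l2 - 1) < 1"
  proof (rule ccontr)
    assume "\<not> absv (l2 - 1) < 1"
    then have "absv c * absv (l2 - 1) \<ge> absv c" using absv_c_pos by simp
    with branch_radius[OF br] l1m r show False by simp
  qed
  then have "absv l2 = 1" using absv_add_eq_right[of "l2 - 1" 1] by simp
  with T have "f2 \<noteq> 0" "g1 \<noteq> 0" using f2_neq_0_iff g1_neq_0_iff by simp_all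
  then show ?thesis using cf_neq_2_if_f2_neq_0 by simp
qed

lemma branch_not_fixed_unit_radius:
  assumes l1: "absv l1 \<le> 1" and l2: "absv l2 \<le> 1" and br: "card {d0, d3, Inf} \<ge> 3"
    and r: "absv c = 1"
  shows "cf \<noteq> 2"
proof -
  have a: "absv a \<le> absv c" using branch_point_position(1)[OF br] .
  have l1m: "absv (l1 - 1) \<le> 1" using absv_diff_le[of l1 1 1] l1 by simp
  have "absv (A0 a) \<le> 1" "absv (A1 a c) \<le> 1" "absv (A2 c) \<le> 1" "absv (B0 a c) \<le> 1" "absv (B1 c) \<le> 1"
    using absv_A0_le[OF l2 a] absv_A1_le[OF l2 a, of c] absv_B0_le[OF l2 a, of c] absv_B1_le[OF l2, of c]
      l1m l1 r by (simp_all add: A2_def max_def split: if_splits)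
  then have "absv t \<ge> 1" using normalisation_bound[of 1] by simp
  moreover have "absv t \<le> 1" using t_spec(4) r unfolding A2_def by simp
  ultimately have T: "absv t = 1" by simp
  then have "f2 \<noteq> 0" using f2_neq_0_iff r by simp
  have "absv (0 - a) \<le> absv c" using a by simp
  from reduced_denominator[OF this] have "g0 + red ((0 - a) / c) * g1 \<noteq> 0"
    using red_neq_0_iff T r unfolding in_O_def by simp
  then have "g0 \<noteq> 0 \<or> g1 \<noteq> 0" by auto
  with \<open>f2 \<noteq> 0\<close> show ?thesis using cf_neq_2_if_f2_neq_0 by simp
qed

lemma branch_not_fixed_small_radius:
  assumes l1: "absv l1 \<le> 1" and l2: "absv l2 \<le> 1" and br: "card {d0, d3, Inf} \<ge> 3"
    and r: "absv c < 1"
  shows "cf \<noteq> 2"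
proof -
  have a: "absv a \<le> absv c" using branch_point_position(1)[OF br] .
  have l1m: "absv (l1 - 1) \<le> 1" using absv_diff_le[of l1 1 1] l1 by simp
  have rr: "absv c * absv c \<le> absv c" using r absv_c_pos by (simp add: mult_left_le_one_le)
  have "absv c * max (absv c) (absv (l1 - 1)) \<le> absv c" "absv c * max (absv l1) (absv c) \<le> absv c"
    using r l1m l1 absv_c_pos by (simp_all add: mult_left_le_one_le)
  then have "absv (A0 a) \<le> absv c" "absv (A1 a c) \<le> absv c" "absv (A2 c) \<le> absv c"
    "absv (B0 a c) \<le> absv c" "absv (B1 c) \<le> absv c"
    using absv_A0_le[OF l2 a] absv_A1_le[OF l2 a, of c] absv_B0_le[OF l2 a, of c] absv_B1_le[OF l2, of c]
      rr r by (simp_all add: A2_def power2_eq_square)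
  then have t_ge: "absv t * absv c \<ge> 1" by (rule normalisation_bound)
  have "absv l2 * absv a \<le> 1 * absv c" using l2 a by (intro mult_mono) auto
  with r have "absv (l2 * a) < 1" by simp
  then have "absv (B0 a c) = absv c" unfolding B0_def using absv_add_eq_left[of "l2 * a" 1] by simp
  with t_ge t_spec(5) have T: "absv t * absv c = 1" by simp
  have "absv c * absv (l2 - 1) \<le> absv c * 1"
    using absv_diff_le[of l2 1 1] l2 absv_c_pos by (intro mult_left_mono) auto
  with r have "absv (l1 - 1) < 1" using branch_radius[OF br] by simp
  then have l1a: "absv l1 = 1" using absv_add_eq_right[of "l1 - 1" 1] by simp
  have a0: "absv (0 - a) \<le> absv c" using a by simp
  define w where "w = red ((0 - a) / c)"
  have "absv (t * c * (1 + l2 * 0)) \<le> 1" "absv (t * c * (l1 + 0 * (2 - l2))) \<le> 1"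
    using reduced_denominator(1)[OF a0] reduced_derivative(1)[OF a0] unfolding in_O_def by blast+
  then have nz: "red (t * c * (1 + l2 * 0)) \<noteq> 0" "red (t * c * (l1 + 0 * (2 - l2))) \<noteq> 0"
    using red_neq_0_iff T l1a by simp_all
  have "g0 + w * g1 = red (t * c * (1 + l2 * 0))"
    unfolding w_def by (rule reduced_denominator(2)[OF a0])
  with nz(1) have "g0 + w * g1 \<noteq> 0" by simp
  moreover have "f1 + 2 * f2 * w - w * g1 = red (t * c * (l1 + 0 * (2 - l2)))"
    unfolding w_def by (rule reduced_derivative(2)[OF a0])
  with nz(2) have "f1 + 2 * f2 * w - w * g1 \<noteq> 0" by simp
  moreover have "f0 + w * (f1 + w * f2) = w * (g0 + w * g1)"
    unfolding w_def by (rule reduced_fixed_point[OF _ a0]) simp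
  ultimately show ?thesis using cf_neq_2_at_fixed_point by blast
qed

lemma branch_not_fixed_repelling:
  assumes l1: "absv l1 > 1" and l2: "absv l2 = 1" and br: "card {d0, d3, Inf} \<ge> 3"
  shows "cf \<noteq> 2"
proof -
  have a: "absv a \<le> absv c" using branch_point_position(1)[OF br] .
  have l2le: "absv l2 \<le> 1" using l2 by simp
  have l1m: "absv (l1 - 1) = absv l1" using absv_diff_eq_left[of 1 l1] l1 by simp
  have "absv c * absv (l2 - 1) \<le> absv c" using absv_diff_le[of l2 1 1] l2 absv_c_pos by simp
  then have l1r: "absv l1 \<le> absv c" using branch_radius[OF br] l1m by simp
  with l1 have r: "absv c > 1" by simp
  have "absv (A0 a) \<le> absv c ^ 2" "absv (A1 a c) \<le> absv c ^ 2" "absv (A2 c) \<le> absv c ^ 2"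
    "absv (B0 a c) \<le> absv c ^ 2" "absv (B1 c) \<le> absv c ^ 2"
    using absv_A0_le[OF l2le a] absv_A1_le[OF l2le a, of c] absv_B0_le[OF l2le a, of c] absv_B1_le[OF l2le, of c]
      l1m l1r r by (simp_all add: A2_def max_def power2_eq_square)
  then have "absv t * absv c ^ 2 \<ge> 1" by (rule normalisation_bound)
  moreover have "absv t * absv c ^ 2 \<le> 1" using t_spec(4) unfolding A2_def by simp
  ultimately have T: "absv t * absv c ^ 2 = 1" by simp
  with l2 have "f2 \<noteq> 0" "g1 \<noteq> 0" using f2_neq_0_iff g1_neq_0_iff by simp_all
  then show ?thesis using cf_neq_2_if_f2_neq_0 by simp
qed

lemma cf_0_gauss_point:
  assumes l1: "absv l1 \<le> 1" and l2: "absv l2 \<le> 1" and cf0: "cf = 0" and red12: "red (l1 * l2) \<noteq> 1"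
  shows "D = disc absv 0 1"
proof -
  note val = cf_0_valuations[OF cf0]
  have o12: "absv (l1 * l2) \<le> 1" using l1 l2 by (simp add: mult_le_one)
  have "\<not> absv (l1 * l2 - 1) < 1" using red12 red_eq_iff[OF o12, of 1] by simp
  moreover have "absv (l1 * l2 - 1) \<le> 1" using absv_diff_le[OF o12, of 1] by simp
  ultimately have "absv (1 - l1 * l2) = 1" using absv_diff_commute[of "l1 * l2" 1] by simp
  then have r: "absv c = 1" using val(1) absv_c_pos by (simp add: power2_eq_1_iff)
  have "absv a \<le> 1"
  proof (rule ccontr)
    assume a1: "\<not> absv a \<le> 1"
    have "absv (l2 * a) \<le> 1"
    proof (rule ccontr)
      assume big: "\<not> absv (l2 * a) \<le> 1"
      then have "absv (1 + l2 * a) = absv (l2 * a)" using absv_add_eq_right[of 1 "l2 * a"] by simp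
      moreover have "absv (1 + l2 * a) \<le> 1" using val(4) r unfolding B0_def by simp
      ultimately show False using big by simp
    qed
    have "absv l2 < 1"
    proof (rule ccontr)
      assume "\<not> absv l2 < 1"
      then have "1 * absv a \<le> absv l2 * absv a" by (intro mult_right_mono) auto
      with \<open>absv (l2 * a) \<le> 1\<close> a1 show False by simp
    qed
    then have "absv (1 - l2) = 1" using absv_diff_eq_left[of l2 1] by simp
    then have h: "absv (a * (1 - l2)) = absv a" by simp
    have "absv (l1 - 1) \<le> 1" using absv_diff_le[of l1 1 1] l1 by simp
    with \<open>absv (1 - l2) = 1\<close> a1 have "absv (l1 - 1) < absv (a * (1 - l2))" by simp
    then have "absv (a * (1 - l2) + (l1 - 1)) = absv a" using absv_add_eq_left h by simp
    then have "absv (A0 a) = absv a * absv a" unfolding A0_def by (simp add: add_diff_eq)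
    with val(2) r have "absv a * absv a \<le> 1" by simp
    moreover have "1 * 1 < absv a * absv a" using a1 by (intro mult_strict_mono) auto
    ultimately show False by simp
  qed
  then show ?thesis using D_eq r disc_cong_center[of a 0 1] by simp
qed

lemma cf_0_parabolic_valuations:
  assumes l1: "absv l1 \<le> 1" and l2: "absv l2 \<le> 1" and cf0: "cf = 0"
    and red1: "red l1 = 1" and red2: "red l2 = 1"
  shows "absv c < 1" "absv l2 = 1" "absv a = 1"
proof -
  note val = cf_0_valuations[OF cf0]
  have "absv (l2 - 1) < 1" using red_eq_iff[OF l2, of 1] red2 by simp
  then show l2a: "absv l2 = 1" using absv_add_eq_right[of "l2 - 1" 1] by simp
  have o12: "absv (l1 * l2) \<le> 1" using l1 l2 by (simp add: mult_le_one)
  have "red (l1 * l2) = 1" using red_mult[OF l1 l2] red1 red2 by simp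
  then have "absv (l1 * l2 - 1) < 1" using red_eq_iff[OF o12, of 1] by simp
  then have "absv c ^ 2 < 1" using val(1) absv_diff_commute[of 1 "l1 * l2"] by simp
  then show r: "absv c < 1" using power_less_imp_less_base[of "absv c" 2 1] by simp
  have B: "absv (1 + l2 * a) \<le> absv c" using val(4) absv_c_pos unfolding B0_def by (simp add: power2_eq_square)
  show "absv a = 1"
  proof (rule ccontr)
    assume "absv a \<noteq> 1"
    then have "absv (l2 * a) \<noteq> 1" using l2a by simp
    then have "absv (1 + l2 * a) \<ge> 1"
      using absv_add_eq_right[of 1 "l2 * a"] absv_add_eq_left[of "l2 * a" 1] by (cases "absv (l2 * a) < 1") auto
    with B r show False by simp
  qed
qed

lemma cf_0_parabolic_disc:
  assumes l1: "absv l1 \<le> 1" and l2: "absv l2 \<le> 1" and cf0: "cf = 0"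
    and red1: "red l1 = 1" and red2: "red l2 = 1"
  shows "D = disc absv (-1) (sqrt (absv (l1 * l2 - 1)))"
proof -
  note val = cf_0_valuations[OF cf0]
  note pv = cf_0_parabolic_valuations[OF assms]
  have X2: "absv (l1 + a * (2 - l2)) \<le> absv c" using val(3) absv_c_pos unfolding A1_def by (simp add: power2_eq_square)
  have "absv c * absv c \<le> absv c" using pv(1) absv_c_pos by (simp add: mult_left_le_one_le)
  then have X3: "absv (a * (1 - l2) + (l1 - 1)) \<le> absv c"
    using val(2) pv(3) unfolding A0_def by (simp add: add_diff_eq power2_eq_square)
  have e: "a + 1 = (l1 + a * (2 - l2)) - (a * (1 - l2) + (l1 - 1))" by (simp add: algebra_simps)
  have "absv (a + 1) \<le> absv c" unfolding e by (rule absv_diff_le[OF X2 X3])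
  then have "absv (a - (-1)) \<le> absv c" by simp
  then have "D = disc absv (-1) (absv c)" using D_eq disc_cong_center by simp
  moreover have "sqrt (absv (l1 * l2 - 1)) = absv c" using val(1) absv_diff_commute[of 1 "l1 * l2"] by simp
  ultimately show ?thesis by simp
qed

lemma cf_neq_0_if_repelling:
  assumes l1: "absv l1 > 1" and l2: "absv l2 \<le> 1"
  shows "cf \<noteq> 0"
proof
  assume cf0: "cf = 0"
  note val = cf_0_valuations[OF cf0]
  have "absv (l1 * l2) \<le> absv l1" using mult_left_le[of "absv l2" "absv l1"] l2 by simp
  then have "absv c ^ 2 \<le> absv l1" using val(1) absv_diff_le[of 1 "absv l1" "l1 * l2"] l1 by simp
  have rl: "absv c < absv l1"
  proof (rule ccontr)
    assume "\<not> absv c < absv l1"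
    then have "absv l1 * absv l1 \<le> absv c * absv c" by (intro mult_mono) auto
    moreover have "absv l1 * 1 < absv l1 * absv l1" using l1 by simp
    ultimately show False using \<open>absv c ^ 2 \<le> absv l1\<close> by (simp add: power2_eq_square)
  qed
  have X2: "absv (l1 + a * (2 - l2)) \<le> absv c" using val(3) absv_c_pos unfolding A1_def by (simp add: power2_eq_square)
  have "a * (2 - l2) = (l1 + a * (2 - l2)) - l1" by simp
  then have "absv (a * (2 - l2)) = absv l1" using absv_diff_eq_right[of "l1 + a * (2 - l2)" l1] X2 rl by simp
  moreover have "absv (a * (2 - l2)) \<le> absv a"
    using absv_diff_le[OF absv_two_le l2] mult_left_le[of "absv (2 - l2)" "absv a"] by simp
  ultimately have al: "absv a \<ge> absv l1" by simp
  have X3: "absv (a * (1 - l2) + (l1 - 1)) < absv c"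
  proof (rule ccontr)
    assume "\<not> ?thesis"
    then have "absv l1 * absv c \<le> absv a * absv (a * (1 - l2) + (l1 - 1))" using al by (intro mult_mono) auto
    moreover have "absv c * absv c < absv l1 * absv c" using rl absv_c_pos by simp
    ultimately show False using val(2) unfolding A0_def by (simp add: add_diff_eq power2_eq_square)
  qed
  have e: "a + 1 = (l1 + a * (2 - l2)) - (a * (1 - l2) + (l1 - 1))" by (simp add: algebra_simps)
  have "absv (a + 1) \<le> absv c" unfolding e by (rule absv_diff_le[OF X2 less_imp_le[OF X3]])
  moreover have "absv (a + 1) = absv a" using absv_add_eq_right[of 1 a] al l1 by (simp add: add.commute)
  ultimately show False using al rl by simp
qed

lemma weight_one_cases:
  assumes w: "weight absv red 2 f g D = 1"
  shows "cf = 0 \<or> (cf = 1 \<and> (\<exists>v\<in>{d0, d3, Inf}. rmap v \<noteq> v)) \<or> (cf = 2 \<and> card {d0, d3, Inf} \<ge> 3)"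
proof -
  consider "cf = 0" | "cf = 1" | "cf = 2" using cf_le_2 by linarith
  then show ?thesis
  proof cases
    case 2
    from 2 have "int (2 - cf) = 1" by simp
    with w weight_if_fixed 2 have "card {v \<in> {d0, d3, Inf}. rmap v \<noteq> v} = 1" by simp
    then have "{v \<in> {d0, d3, Inf}. rmap v \<noteq> v} \<noteq> {}" by (metis card.empty zero_neq_one)
    with 2 show ?thesis by blast
  next
    case 3
    have "card {d0, d3, Inf} \<ge> 3"
    proof (rule ccontr)
      assume "\<not> card {d0, d3, Inf} \<ge> 3"
      with 3 have "weight absv red 2 f g D = 0" using weight_if_not_fixed by simp
      with w show False by simp
    qed
    with 3 show ?thesis by blast
  qed simp
qed

lemma nonrepelling_branch_not_fixed:
  assumes "absv l1 \<le> 1" "absv l2 \<le> 1" "card {d0, d3, Inf} \<ge> 3"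
  shows "cf \<noteq> 2"
  using branch_not_fixed_large_radius[OF assms] branch_not_fixed_unit_radius[OF assms]
    branch_not_fixed_small_radius[OF assms] by (cases "absv c" "1 :: real" rule: linorder_cases) auto

lemma nonrepelling_no_moved_direction:
  assumes l1: "absv l1 \<le> 1" and l2: "absv l2 \<le> 1" and l3: "absv (fin_multiplier f g alpha3) \<le> 1"
    and cf1: "cf \<le> 1" and v: "v \<in> {d0, d3, Inf}"
  shows "rmap v = v"
proof (rule ccontr)
  assume "rmap v \<noteq> v"
  with moved_direction_cases[OF cf1 l2 v] l1
  have "absv (l1 + alpha3 * (2 - l2)) = absv c" "absv (1 + l2 * alpha3) < absv c" by auto
  moreover have "absv (1 + l2 * alpha3) > 0" using denominator_at_alpha3_neq_0 absv_pos by blast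
  ultimately have "absv (fin_multiplier f g alpha3) > 1" using multiplier_alpha3 by simp
  with l3 show False by simp
qed

lemma weight_one_nonrepelling:
  assumes l1: "absv l1 \<le> 1" and l2: "absv l2 \<le> 1" and l3: "absv (fin_multiplier f g alpha3) \<le> 1"
    and w: "weight absv red 2 f g D = 1"
  shows "W1 absv red 2 f g D \<and> (red (l1 * l2) \<noteq> 1 \<longrightarrow> D = disc absv 0 1) \<and>
    (red l1 = 1 \<and> red l2 = 1 \<and> red (fin_multiplier f g alpha3) = 1 \<longrightarrow>
       D = disc absv (-1) (sqrt (absv (l1 * l2 - 1))))"
proof -
  have "cf = 0"
    using weight_one_cases[OF w] nonrepelling_no_moved_direction[OF l1 l2 l3]
      nonrepelling_branch_not_fixed[OF l1 l2] by force
  then have "W1 absv red 2 f g D" unfolding W1_def fixedII_iff red_deg_at_D by simp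
  with \<open>cf = 0\<close> show ?thesis using cf_0_gauss_point[OF l1 l2] cf_0_parabolic_disc[OF l1 l2] by blast
qed

lemma repelling_moved_direction:
  assumes l1: "absv l1 > 1" and l2: "absv l2 \<le> 1" and cf1: "cf \<le> 1"
    and v: "v \<in> {d0, d3, Inf}" and moved: "rmap v \<noteq> v"
  shows "absv a \<le> absv c" "v = Fin (red ((0 - a) / c))" "absv l2 = 1" "absv l1 = absv c"
proof -
  have "\<not> (absv l2 = 1 \<and> absv (l1 + alpha3 * (2 - l2)) = absv c \<and> absv (1 + l2 * alpha3) < absv c)"
  proof
    assume h: "absv l2 = 1 \<and> absv (l1 + alpha3 * (2 - l2)) = absv c \<and> absv (1 + l2 * alpha3) < absv c"
    have "absv (l2 - 2) \<le> 1" using absv_diff_le[of l2 1 2] h absv_two_le by simp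
    then have "absv (l1 + l2 - 2) = absv l1" using absv_add_eq_left[of "l2 - 2" l1] l1 by (simp add: add_diff_eq)
    moreover have "absv (l1 * l2 - 1) = absv l1" using absv_diff_eq_left[of 1 "l1 * l2"] l1 h by simp
    ultimately have "absv (l1 + alpha3 * (2 - l2)) = absv (1 + l2 * alpha3)"
      unfolding numerator_at_alpha3 denominator_at_alpha3 by simp
    moreover from h have "absv (l1 + alpha3 * (2 - l2)) = absv c" "absv (1 + l2 * alpha3) < absv c" by auto
    ultimately show False by linarith
  qed
  then show "absv a \<le> absv c" "v = Fin (red ((0 - a) / c))" "absv l2 = 1" "absv l1 = absv c"
    using moved_direction_cases[OF cf1 l2 v moved] by auto
qed

lemma repelling_reduced_map:
  assumes l2: "absv l2 \<le> 1" and cf1: "cf \<le> 1" and a: "absv a \<le> absv c"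
    and moved: "rmap d0 \<noteq> d0"
  shows "red l2 \<noteq> 0" "rmap Inf = Inf" "\<exists>\<beta>. \<forall>y. rmap (Fin y) = Fin (inverse (red l2) * y + \<beta>)"
proof -
  have a0: "absv (0 - a) \<le> absv c" using a by simp
  with moved have "rmap (Fin (red ((0 - a) / c))) \<noteq> Fin (red ((0 - a) / c))" using dir_Fin by simp
  note fx = moved_fixed_direction[OF cf1 disjI1[OF refl] a0 this]
  show "red l2 \<noteq> 0" using red_neq_0_iff[OF l2] fx(1) by simp
  show "rmap Inf = Inf" using fx(5) .
  have "f2 / g1 = inverse (red l2)" using g1_eq[OF l2] fx(4) \<open>red l2 \<noteq> 0\<close> by (simp add: field_simps)
  then show "\<exists>\<beta>. \<forall>y. rmap (Fin y) = Fin (inverse (red l2) * y + \<beta>)" using fx(6) by simp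
qed

lemma repelling_W2:
  assumes l1: "absv l1 > 1" and l2: "absv l2 \<le> 1" and cf1: "cf \<le> 1" and a: "absv a \<le> absv c"
    and l1c: "absv l1 = absv c" and moved: "rmap d0 \<noteq> d0" and red2: "red l2 \<noteq> 1"
  shows "W2 absv red 2 f g D"
proof -
  note m = repelling_reduced_map[OF l2 cf1 a moved]
  obtain \<beta> where \<beta>: "\<And>y. rmap (Fin y) = Fin (inverse (red l2) * y + \<beta>)" using m(3) by blast
  have "inverse (red l2) \<noteq> 1" using red2 by (metis inverse_1 inverse_inverse_eq)
  then have "conj_over rmap (mob (inverse (red l2)) 0 0 1)" using conj_over_affine[OF m(2) \<beta>] by simp
  then have conj: "\<exists>c'. c' \<noteq> 0 \<and> c' \<noteq> 1 \<and> conj_over rmap (mob c' 0 0 1)"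
    using m(1) \<open>inverse (red l2) \<noteq> 1\<close> by (intro exI[of _ "inverse (red l2)"]) simp
  have "\<not> absv (l2 - 1) < 1" using red_eq_iff[OF l2, of 1] red2 by simp
  then have "absv (l2 - 1) = 1" using absv_diff_le[of l2 1 1] l2 by simp
  moreover have "absv (l1 - 1) = absv l1" using absv_diff_eq_left[of 1 l1] l1 by simp
  ultimately have al3: "absv alpha3 = absv c" using absv_alpha3 l1c by simp
  have a3: "absv (alpha3 - a) \<le> absv c" using absv_diff_le[of alpha3 "absv c" a] al3 a by simp
  have "absv ((0 - a) / c - (alpha3 - a) / c) = 1"
    using al3 c_neq_0 absv_c_pos by (simp add: diff_divide_distrib)
  then have "red ((0 - a) / c) \<noteq> red ((alpha3 - a) / c)"
    using red_eq_iff in_O_chart[of 0] in_O_chart[OF a3] a unfolding in_O_def by simp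
  then have "card {d0, d3, Inf} = 3" using dir_Fin a a3 by simp
  then have "branch_GammaFix absv red 2 f g D"
    unfolding branch_GammaFix_def valence_fixcl_pts using typeII by simp
  with conj cf1 show ?thesis unfolding W2_def red_map_at_D fixedII_iff by blast
qed

lemma repelling_W3:
  assumes l2: "absv l2 \<le> 1" and cf1: "cf \<le> 1" and a: "absv a \<le> absv c"
    and moved: "rmap d0 \<noteq> d0" and red2: "red l2 = 1"
  shows "W3 absv red 2 f g D"
proof -
  note m = repelling_reduced_map[OF l2 cf1 a moved]
  obtain \<beta> where \<beta>: "\<And>y. rmap (Fin y) = Fin (y + \<beta>)" using m(3) red2 by auto
  have d0: "d0 = Fin (red ((0 - a) / c))" using dir_Fin a by simp
  with moved \<beta> have "\<beta> \<noteq> 0" by auto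
  then have conj: "\<exists>b. b \<noteq> 0 \<and> conj_over rmap (mob 1 b 0 1)"
    using conj_over_translation[OF m(2) \<beta>] by blast
  have "card {d0, Inf} \<le> card {d0, d3, Inf}" by (rule card_mono) auto
  then have "card {d0, d3, Inf} \<ge> 2" using d0 by simp
  then have "in_GammaFix absv red 2 f g D" unfolding in_GammaFix_def valence_fixcl_pts using typeII by simp
  with conj cf1 show ?thesis unfolding W3_def red_map_at_D fixedII_iff by blast
qed

lemma weight_one_repelling:
  assumes l1: "absv l1 > 1" and l2: "absv l2 \<le> 1" and w: "weight absv red 2 f g D = 1"
  shows "D = disc absv 0 (absv l1) \<and> (red l2 \<noteq> 0 \<and> red l2 \<noteq> 1 \<longrightarrow> W2 absv red 2 f g D) \<and>
     (red l2 = 1 \<longrightarrow> W3 absv red 2 f g D) \<and> (red l2 = 0 \<longrightarrow> W4 absv red 2 f g D)"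
proof -
  consider "cf = 1" "\<exists>v\<in>{d0, d3, Inf}. rmap v \<noteq> v" | "cf = 2" "card {d0, d3, Inf} \<ge> 3"
    using weight_one_cases[OF w] cf_neq_0_if_repelling[OF l1 l2] by blast
  then show ?thesis
  proof cases
    case 1
    then obtain v where v: "v \<in> {d0, d3, Inf}" "rmap v \<noteq> v" by blast
    have cf1: "cf \<le> 1" using 1 by simp
    note rm = repelling_moved_direction[OF l1 l2 cf1 v]
    have moved: "rmap d0 \<noteq> d0" using v(2) rm(1,2) dir_Fin by simp
    have "D = disc absv 0 (absv l1)" using D_eq disc_cong_center[of a 0 "absv c"] rm(1,4) by simp
    then show ?thesis
      using repelling_W2[OF l1 l2 cf1 rm(1,4) moved] repelling_W3[OF l2 cf1 rm(1) moved]
        repelling_reduced_map(1)[OF l2 cf1 rm(1) moved] by blast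
  next
    case 2
    have "absv l2 < 1" using branch_not_fixed_repelling[OF l1 _ 2(2)] l2 2(1) by fastforce
    then have "red l2 = 0" using red_eq_0_iff[OF l2] by simp
    have "absv (l2 - 1) = 1" using absv_diff_eq_right[of l2 1] \<open>absv l2 < 1\<close> by simp
    moreover have "absv (l1 - 1) = absv l1" using absv_diff_eq_left[of 1 l1] l1 by simp
    ultimately have "absv c = absv l1" using absv_alpha3 branch_point_position(3)[OF 2(2)] by simp
    then have "D = disc absv 0 (absv l1)"
      using D_eq disc_cong_center[of a 0 "absv c"] branch_point_position(1)[OF 2(2)] by simp
    moreover have "W4 absv red 2 f g D"
      unfolding W4_def branch_GammaFix_def valence_fixcl_pts fixedII_iff using typeII 2 by simp
    ultimately show ?thesis using \<open>red l2 = 0\<close> by simp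
  qed
qed

end

theorem proposition3p4:
  fixes absv :: "'a::field \<Rightarrow> real" and red :: "'a \<Rightarrow> 'k::field" and l1 l2 :: 'a
  assumes "nonarch_abs absv"
    and "complete_wrt absv"
    and "alg_closed TYPE('a)"
    and "residue_map absv red"
    and "l1 * l2 \<noteq> 1"
    and "l2 \<noteq> 1"
    and "(l1 - 1) / (l2 - 1) \<noteq> 0"
  shows
   "let f = phi_f l1; g = phi_g l2;
        l3 = fin_multiplier f g ((l1 - 1) / (l2 - 1));
        w = weight absv red 2 f g
    in
     (absv l1 \<le> 1 \<and> absv l2 \<le> 1 \<and> absv l3 \<le> 1 \<longrightarrow>
        (\<forall>\<xi>. w \<xi> = 1 \<longrightarrow>
           W1 absv red 2 f g \<xi> \<and>
           (red (l1 * l2) \<noteq> 1 \<longrightarrow> \<xi> = disc absv 0 1) \<and>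
           (red l1 = 1 \<and> red l2 = 1 \<and> red l3 = 1 \<longrightarrow>
              \<xi> = disc absv (-1) (sqrt (absv (l1 * l2 - 1))))))
   \<and> (absv l1 > 1 \<and> absv l2 \<le> 1 \<longrightarrow>
        (\<forall>\<xi>. w \<xi> = 1 \<longrightarrow>
           \<xi> = disc absv 0 (absv l1) \<and>
           (red l2 \<noteq> 0 \<and> red l2 \<noteq> 1 \<longrightarrow> W2 absv red 2 f g \<xi>) \<and>
           (red l2 = 1 \<longrightarrow> W3 absv red 2 f g \<xi>) \<and>
           (red l2 = 0 \<longrightarrow> W4 absv red 2 f g \<xi>)))"
proof -
  interpret phi_valued absv red l1 l2
    by unfold_locales (use assms in auto)
  have at_disc: "phi_at_disc absv red l1 l2 \<xi> (fst (rep absv \<xi>)) (snd (rep absv \<xi>))"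
    if "weight absv red 2 f g \<xi> = 1" for \<xi>
    using weight_nonzero_typeII[of absv red 2 f g \<xi>] that
    by unfold_locales simp_all
  show ?thesis
    unfolding Let_def alpha3_def[symmetric]
    using phi_at_disc.weight_one_nonrepelling[OF at_disc] phi_at_disc.weight_one_repelling[OF at_disc]
    by blast
qed

end
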